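(* Consider the distributed estimation setting described in the context, with $n$ agents, $M$ fixed features, $c$ measurements per agent per time step, network matrix $\mathbf{P}=\mathbf{I}_n-\alpha\mathbf{L}$, and each agent $i$ running $$\hat{\boldsymbol{\theta}}_{i,t+1}=\sum_{j=1}^n \mathbf{P}_{ij}\hat{\boldsymbol{\theta}}_{j,t}+\alpha\,\mathbf{H}_{i,t}^\top(\mathbf{y}_{i,t}-\mathbf{H}_{i,t}\hat{\boldsymbol{\theta}}_{i,t})$$ from initial estimates with finite second moments. Let $\mathbf{e}_t=[\mathbf{e}_{1,t}^\top,\dots,\mathbf{e}_{n,t}^\top]^\top$ with $\mathbf{e}_{i,t}=\hat{\boldsymbol{\theta}}_{i,t}-\boldsymbol{\theta}$, and let $\mathbf{B}=\mathbf{L}\otimes\mathbf{I}_M+c\,\mathrm{diag}[\mathbf{G}_1,\dots,\mathbf{G}_n]$. If $$\alpha<\frac{2\lambda_{Mn}(\mathbf{B})}{(\lambda_1(\mathbf{L})+2Mc)^2},$$ then $$\limsup_{t\to\infty}\mathbb{E}[\mathbf{e}_t^\top\mathbf{e}_t]\le\frac{2\alpha cMn\sigma_v^2}{2\lambda_{Mn}(\mathbf{B})-\alpha(\lambda_1(\mathbf{L})+2Mc)^2},$$ where the expectation is over the inputs and the observation noise.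
   Context: Setting: an unknown parameter $\boldsymbol{\theta}\in\mathbb{R}^M$. Fixed features $\boldsymbol{\omega}_1,\dots,\boldsymbol{\omega}_M$ and a feature map $\phi(\mathbf{x},\boldsymbol{\omega})$ with $\sup_{\mathbf{x},\boldsymbol{\omega}}|\phi(\mathbf{x},\boldsymbol{\omega})|\le\sqrt2$. There are $n$ agents; at each time $t$, agent $i\in\{1,\dots,n\}$ receives $c$ random inputs $\mathbf{x}_{1,i,t},\dots,\mathbf{x}_{c,i,t}\in\mathbb{R}^d$ and forms $\mathbf{H}_{i,t}\in\mathbb{R}^{c\times M}$ with $(j,l)$ entry $\phi(\mathbf{x}_{j,i,t},\boldsymbol{\omega}_l)$, and observes $\mathbf{y}_{i,t}=\mathbf{H}_{i,t}\boldsymbol{\theta}+\mathbf{v}_{i,t}$ with $\mathbb{E}[\mathbf{v}_{i,t}]=\mathbf{0}$, $\mathbb{E}[\mathbf{v}_{i,t}\mathbf{v}_{i,t}^\top]=\sigma_v^2\mathbf{I}_c$. The inputs and noise at time $t$ are independent of each other and of everything generated before time $t$, and the input distributions do not depend on $t$. Define $\mathbf{G}_i=c^{-1}\mathbb{E}[\mathbf{H}_{i,t}^\top\mathbf{H}_{i,t}]$; each $\mathbf{G}_i$ has rank strictly less than $M$ while $\sum_{i=1}^n\mathbf{G}_i$ is invertible. Network: the communication graph is undirected and connected, $\mathbf{L}$ is its graph Laplacian, $\mathbf{P}=\mathbf{I}_n-\alpha\mathbf{L}$ with $0<\alpha<1/\mathrm{deg}$ ($\mathrm{deg}$ = maximum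 degree); the same $\alpha$ is the step size. $\lambda_i(\cdot)$ denotes the $i$-th largest eigenvalue, so $\lambda_{Mn}(\mathbf{B})$ is the smallest eigenvalue of the $Mn\times Mn$ matrix $\mathbf{B}$ and $\lambda_1(\mathbf{L})$ the largest eigenvalue of $\mathbf{L}$. *)

theory Defs
  imports "HOL-Probability.Probability"
begin

text \<open>Real eigenvalues of a square real matrix (indexed by a finite type).
  For a symmetric matrix all eigenvalues are real, so this is the full spectrum.\<close>
definition eigvals :: "real^'k^'k \<Rightarrow> real set" where
  "eigvals A = {lam. \<exists>x. x \<noteq> 0 \<and> A *v x = lam *\<^sub>R x}"

text \<open>Smallest eigenvalue (lambda_N for an N x N matrix) and largest eigenvalue (lambda_1).\<close>
definition lam_min :: "real^'k^'k \<Rightarrow> real" where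
  "lam_min A = Min (eigvals A)"

definition lam_max :: "real^'k^'k \<Rightarrow> real" where
  "lam_max A = Max (eigvals A)"

definition degree :: "('n \<Rightarrow> 'n \<Rightarrow> bool) \<Rightarrow> 'n \<Rightarrow> nat" where
  "degree E i = card {j. E i j}"

definition max_degree :: "('n::finite \<Rightarrow> 'n \<Rightarrow> bool) \<Rightarrow> nat" where
  "max_degree E = Max (range (degree E))"

definition laplacian :: "('n::finite \<Rightarrow> 'n \<Rightarrow> bool) \<Rightarrow> real^'n^'n" where
  "laplacian E = (\<chi> i j. if i = j then real (degree E i) else if E i j then -1 else 0)"

definition connected_graph :: "('n \<Rightarrow> 'n \<Rightarrow> bool) \<Rightarrow> bool" where
  "connected_graph E \<longleftrightarrow> (\<forall>i j. (i, j) \<in> {(a, b). E a b}\<^sup>*)"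

text \<open>Row j of the regressor matrix H_{i,t}: the vector (phi(x_{j,i,t}, omega_l))_l.\<close>
definition Hrow :: "(real^'d \<Rightarrow> real^'d \<Rightarrow> real) \<Rightarrow> ('m::finite \<Rightarrow> real^'d)
    \<Rightarrow> (nat \<Rightarrow> 'n \<Rightarrow> 'c \<Rightarrow> 'a \<Rightarrow> real^'d) \<Rightarrow> nat \<Rightarrow> 'n \<Rightarrow> 'c \<Rightarrow> 'a \<Rightarrow> real^'m" where
  "Hrow \<phi> feat X t i k \<omega> = (\<chi> l. \<phi> (X t i k \<omega>) (feat l))"

definition obs :: "(real^'d \<Rightarrow> real^'d \<Rightarrow> real) \<Rightarrow> ('m::finite \<Rightarrow> real^'d)
    \<Rightarrow> real^'m \<Rightarrow> (nat \<Rightarrow> 'n \<Rightarrow> 'c \<Rightarrow> 'a \<Rightarrow> real^'d) \<Rightarrow> (nat \<Rightarrow> 'n \<Rightarrow> 'c \<Rightarrow> 'a \<Rightarrow> real)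
    \<Rightarrow> nat \<Rightarrow> 'n \<Rightarrow> 'c \<Rightarrow> 'a \<Rightarrow> real" where
  "obs \<phi> feat \<theta> X v t i k \<omega> = Hrow \<phi> feat X t i k \<omega> \<bullet> \<theta> + v t i k \<omega>"

text \<open>The distributed estimates
  theta_{i,t+1} = sum_j P_ij theta_{j,t} + alpha H_{i,t}^T (y_{i,t} - H_{i,t} theta_{i,t}).
  Note H^T (y - H th) = sum_k (y_k - h_k . th) h_k with h_k the rows of H.\<close>
primrec est :: "real^'n^'n \<Rightarrow> real \<Rightarrow> (real^'d \<Rightarrow> real^'d \<Rightarrow> real) \<Rightarrow> ('m::finite \<Rightarrow> real^'d)
    \<Rightarrow> real^'m \<Rightarrow> ('n::finite \<Rightarrow> 'a \<Rightarrow> real^'m)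
    \<Rightarrow> (nat \<Rightarrow> 'n \<Rightarrow> 'c::finite \<Rightarrow> 'a \<Rightarrow> real^'d) \<Rightarrow> (nat \<Rightarrow> 'n \<Rightarrow> 'c \<Rightarrow> 'a \<Rightarrow> real)
    \<Rightarrow> nat \<Rightarrow> 'n \<Rightarrow> 'a \<Rightarrow> real^'m" where
  "est P \<alpha> \<phi> feat \<theta> \<theta>0 X v 0 i \<omega> = \<theta>0 i \<omega>"
| "est P \<alpha> \<phi> feat \<theta> \<theta>0 X v (Suc t) i \<omega> =
     (\<Sum>j\<in>UNIV. P $ i $ j *\<^sub>R est P \<alpha> \<phi> feat \<theta> \<theta>0 X v t j \<omega>)
     + \<alpha> *\<^sub>R (\<Sum>k\<in>UNIV. (obs \<phi> feat \<theta> X v t i k \<omega>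
                 - Hrow \<phi> feat X t i k \<omega> \<bullet> est P \<alpha> \<phi> feat \<theta> \<theta>0 X v t i \<omega>)
                 *\<^sub>R Hrow \<phi> feat X t i k \<omega>)"

definition gen_events :: "'a measure \<Rightarrow> ('a \<Rightarrow> 'b::topological_space) \<Rightarrow> 'a set set" where
  "gen_events M f = {f -` A \<inter> space M | A. A \<in> sets borel}"

definition past_events :: "'a measure \<Rightarrow> ('n \<Rightarrow> 'a \<Rightarrow> real^'m::finite)
    \<Rightarrow> (nat \<Rightarrow> 'n \<Rightarrow> 'c \<Rightarrow> 'a \<Rightarrow> real^'d) \<Rightarrow> (nat \<Rightarrow> 'n \<Rightarrow> 'c \<Rightarrow> 'a \<Rightarrow> real)
    \<Rightarrow> nat \<Rightarrow> 'a set set" where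
  "past_events M \<theta>0 X v t = sigma_sets (space M)
     ((\<Union>i. gen_events M (\<theta>0 i))
      \<union> (\<Union>s\<in>{..<t}. \<Union>i. \<Union>k. gen_events M (X s i k) \<union> gen_events M (v s i k)))"

definition input_events :: "'a measure \<Rightarrow> (nat \<Rightarrow> 'n \<Rightarrow> 'c \<Rightarrow> 'a \<Rightarrow> real^'d) \<Rightarrow> nat \<Rightarrow> 'a set set" where
  "input_events M X t = sigma_sets (space M) (\<Union>i. \<Union>k. gen_events M (X t i k))"

definition noise_events :: "'a measure \<Rightarrow> (nat \<Rightarrow> 'n \<Rightarrow> 'c \<Rightarrow> 'a \<Rightarrow> real) \<Rightarrow> nat \<Rightarrow> 'a set set" where
  "noise_events M v t = sigma_sets (space M) (\<Union>i. \<Union>k. gen_events M (v t i k))"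

text \<open>G_i = c^{-1} E[H_{i,t}^T H_{i,t}] (independent of t; taken at t = 0).\<close>
definition Gmat :: "'a measure \<Rightarrow> (real^'d \<Rightarrow> real^'d \<Rightarrow> real) \<Rightarrow> ('m::finite \<Rightarrow> real^'d)
    \<Rightarrow> (nat \<Rightarrow> 'n \<Rightarrow> 'c::finite \<Rightarrow> 'a \<Rightarrow> real^'d) \<Rightarrow> 'n \<Rightarrow> real^'m^'m" where
  "Gmat M \<phi> feat X i = (\<chi> l l'. (1 / real CARD('c)) *
      integral\<^sup>L M (\<lambda>\<omega>. \<Sum>k\<in>UNIV. \<phi> (X 0 i k \<omega>) (feat l) * \<phi> (X 0 i k \<omega>) (feat l')))"

text \<open>B = L (x) I_M + c diag[G_1,...,G_n], indexed by pairs (agent, feature).\<close>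
definition Bmat :: "real^'n^'n \<Rightarrow> real \<Rightarrow> ('n::finite \<Rightarrow> real^'m^'m) \<Rightarrow> real^('n \<times> 'm::finite)^('n \<times> 'm)" where
  "Bmat L c G = (\<chi> p q. L $ fst p $ fst q * (if snd p = snd q then 1 else 0)
                     + c * (if fst p = fst q then G (fst p) $ snd p $ snd q else 0))"

end

(* Write e_t for the stacked error of all agents. One step of the algorithm reads
   e_{t+1} = e_t - alpha r_t + alpha H_t^T v_t, where the drift r_t has blocks
   ((L (x) I) e_t)_i + H_{i,t}^T H_{i,t} e_{i,t}. The error e_t is a function of the past only, which is
   independent of the inputs and the noise at time t. Hence in expectation the Gram matrices
   H^T H may be replaced by their means c G_i, so E <e_t, r_t> = E [e_t^T B e_t] >= lambda_Mn(B) E |e_t|^2;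
   the cross term with the centred noise vanishes; and E |H_{i,t}^T v_{i,t}|^2 <= 2 M c sigma_v^2 since
   |phi| <= sqrt 2. Pointwise, |r_t| <= (lambda_1(L) + 2 M c) |e_t|. So a_t = E |e_t|^2 obeys
   a_{t+1} <= rho a_t + 2 alpha^2 c M n sigma_v^2 with rho = 1 - 2 alpha lambda_Mn(B) + alpha^2 (lambda_1(L) + 2 M c)^2,
   and the step-size condition says exactly rho < 1; the limsup of such a sequence is at most the fixed
   point of the recursion. *)

theory Submission
  imports Defs
begin

section \<open>Quadratic forms and extreme eigenvalues of symmetric matrices\<close>

definition quad_form :: "real^'k^'k \<Rightarrow> real^'k \<Rightarrow> real" where
  "quad_form A x = x \<bullet> (A *v x)"

lemma quadratic_nonneg_imp_discriminant_le:
  fixes a b c :: real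
  assumes nonneg: "\<And>t. 0 \<le> a + 2 * b * t + c * t\<^sup>2" and "0 \<le> c"
  shows "b\<^sup>2 \<le> a * c"
proof (cases "c = 0")
  case True
  have "b = 0"
  proof (rule ccontr)
    assume "b \<noteq> 0"
    have "0 \<le> a + 2 * b * (- (\<bar>a\<bar> + 1) / (2 * b))"
      using nonneg[of "- (\<bar>a\<bar> + 1) / (2 * b)"] True by simp
    also have "\<dots> = a - (\<bar>a\<bar> + 1)" using \<open>b \<noteq> 0\<close> by (simp add: field_simps)
    finally show False by linarith
  qed
  then show ?thesis using True by simp
next
  case False
  with \<open>0 \<le> c\<close> have "0 < c" by simp
  have "0 \<le> a + 2 * b * (- b / c) + c * (- b / c)\<^sup>2" by (rule nonneg)
  also have "\<dots> = a - b\<^sup>2 / c" using \<open>0 < c\<close> by (simp add: field_simps power2_eq_square)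
  finally show ?thesis using \<open>0 < c\<close> by (simp add: field_simps mult.commute)
qed

lemma symmetric_matrix_inner_commute:
  fixes A :: "real^'k^'k"
  assumes "transpose A = A"
  shows "x \<bullet> (A *v y) = y \<bullet> (A *v x)"
  by (metis assms dot_lmul_matrix inner_commute transpose_matrix_vector)

lemma quad_form_add_scaleR:
  fixes A :: "real^'k^'k"
  assumes "transpose A = A"
  shows "quad_form A (x + t *\<^sub>R y) = quad_form A x + 2 * (y \<bullet> (A *v x)) * t + quad_form A y * t\<^sup>2"
  using symmetric_matrix_inner_commute[OF assms, of x y]
  by (simp add: quad_form_def matrix_vector_right_distrib matrix_vector_mult_scaleR
      inner_add_left inner_add_right power2_eq_square algebra_simps)

lemma psd_quad_form_Cauchy_Schwarz:
  fixes A :: "real^'k^'k"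
  assumes "transpose A = A" and psd: "\<And>z. 0 \<le> quad_form A z"
  shows "(y \<bullet> (A *v x))\<^sup>2 \<le> quad_form A x * quad_form A y"
proof (rule quadratic_nonneg_imp_discriminant_le)
  fix t
  show "0 \<le> quad_form A x + 2 * (y \<bullet> (A *v x)) * t + quad_form A y * t\<^sup>2"
    using psd[of "x + t *\<^sub>R y"] by (simp only: quad_form_add_scaleR[OF assms(1)])
qed (rule psd)

lemma psd_quad_form_eq_0_imp:
  fixes A :: "real^'k^'k"
  assumes "transpose A = A" and "\<And>z. 0 \<le> quad_form A z" and "quad_form A x = 0"
  shows "A *v x = 0"
proof -
  have "((A *v x) \<bullet> (A *v x))\<^sup>2 \<le> 0"
    using psd_quad_form_Cauchy_Schwarz[OF assms(1,2), of "A *v x" x] assms(3) by simp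
  then show ?thesis by simp
qed

lemma finite_eigvals_symmetric:
  fixes A :: "real^'k^'k"
  assumes sym: "transpose A = A"
  shows "finite (eigvals A)"
proof -
  define f where "f lam = (SOME x. x \<noteq> 0 \<and> A *v x = lam *\<^sub>R x)" for lam
  have f: "f lam \<noteq> 0" "A *v f lam = lam *\<^sub>R f lam" if "lam \<in> eigvals A" for lam
    using someI_ex[of "\<lambda>x. x \<noteq> 0 \<and> A *v x = lam *\<^sub>R x"] that
    unfolding eigvals_def f_def by auto
  \<comment> \<open>eigenvectors for distinct eigenvalues are orthogonal, hence linearly independent\<close>
  have orth: "f a \<bullet> f b = 0" if "a \<in> eigvals A" "b \<in> eigvals A" "a \<noteq> b" for a b
  proof -
    have "b * (f a \<bullet> f b) = a * (f a \<bullet> f b)"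
      using symmetric_matrix_inner_commute[OF sym, of "f a" "f b"] f that
      by (simp add: inner_commute)
    then show ?thesis using \<open>a \<noteq> b\<close> by simp
  qed
  have inj: "inj_on f (eigvals A)"
  proof (rule inj_onI)
    fix a b assume ab: "a \<in> eigvals A" "b \<in> eigvals A" "f a = f b"
    show "a = b" using orth[OF ab(1,2)] f(1)[OF ab(1)] ab(3) by auto
  qed
  have "pairwise orthogonal (f ` eigvals A)"
    using orth by (auto simp: pairwise_def orthogonal_def)
  moreover have "0 \<notin> f ` eigvals A" using f(1) by auto
  ultimately have "independent (f ` eigvals A)" by (rule pairwise_orthogonal_independent)
  then have "finite (f ` eigvals A)" using independent_bound by blast
  then show ?thesis using inj by (rule finite_imageD)
qed

lemma symmetric_Rayleigh_min_eigval:
  fixes A :: "real^'k^'k"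
  assumes sym: "transpose A = A"
  obtains m where "m \<in> eigvals A" and "\<And>x. m * (norm x)\<^sup>2 \<le> quad_form A x"
proof -
  have cont: "continuous_on (sphere 0 1) (quad_form A)"
    unfolding quad_form_def by (intro continuous_intros linear_continuous_on bounded_linear_intros)
  obtain x0 where x0: "x0 \<in> sphere (0::real^'k) 1"
    and x0_min: "\<And>y. y \<in> sphere 0 1 \<Longrightarrow> quad_form A x0 \<le> quad_form A y"
    using continuous_attains_inf[OF compact_sphere _ cont] by auto
  define m where "m = quad_form A x0"
  have bound: "m * (norm x)\<^sup>2 \<le> quad_form A x" for x
  proof (cases "x = 0")
    case False
    have "m \<le> quad_form A ((1 / norm x) *\<^sub>R x)"
      unfolding m_def using False by (intro x0_min) simp
    also have "\<dots> = quad_form A x / (norm x)\<^sup>2"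
      by (simp add: quad_form_def matrix_vector_mult_scaleR power2_eq_square)
    finally show ?thesis using False by (simp add: field_simps)
  qed (simp add: quad_form_def)
  \<comment> \<open>the minimiser x0 is an eigenvector: A - m I is positive semidefinite and vanishes on x0\<close>
  define C where "C = A - m *\<^sub>R mat 1"
  have quad_C: "quad_form C z = quad_form A z - m * (norm z)\<^sup>2" for z
    by (simp add: C_def quad_form_def matrix_vector_mult_diff_rdistrib inner_diff_right
        power2_norm_eq_inner flip: scaleR_matrix_vector_assoc)
  have "transpose C = C"
    using sym by (simp add: C_def transpose_def vec_eq_iff mat_def)
  moreover have "0 \<le> quad_form C z" for z using bound[of z] quad_C by simp
  moreover have "quad_form C x0 = 0" using quad_C x0 m_def by simp
  ultimately have "C *v x0 = 0" by (rule psd_quad_form_eq_0_imp)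
  then have "A *v x0 = m *\<^sub>R x0"
    by (simp add: C_def matrix_vector_mult_diff_rdistrib flip: scaleR_matrix_vector_assoc)
  moreover have "x0 \<noteq> 0" using x0 by auto
  ultimately have "m \<in> eigvals A" unfolding eigvals_def by blast
  then show ?thesis using bound by (rule that)
qed

lemma lam_min_le_quad_form:
  fixes A :: "real^'k^'k"
  assumes sym: "transpose A = A"
  shows "lam_min A * (norm x)\<^sup>2 \<le> quad_form A x"
proof -
  obtain m where m: "m \<in> eigvals A" "\<And>x. m * (norm x)\<^sup>2 \<le> quad_form A x"
    using symmetric_Rayleigh_min_eigval[OF sym] by blast
  have "lam_min A \<le> m" unfolding lam_min_def using m(1) finite_eigvals_symmetric[OF sym] by simp
  then have "lam_min A * (norm x)\<^sup>2 \<le> m * (norm x)\<^sup>2" by (simp add: mult_right_mono)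
  with m(2)[of x] show ?thesis by linarith
qed

lemma quad_form_le_lam_max:
  fixes A :: "real^'k^'k"
  assumes sym: "transpose A = A"
  shows "quad_form A x \<le> lam_max A * (norm x)\<^sup>2"
proof -
  have "transpose (- A) = - A" using sym by (simp add: transpose_def vec_eq_iff)
  then obtain m where m: "m \<in> eigvals (- A)" "\<And>x. m * (norm x)\<^sup>2 \<le> quad_form (- A) x"
    using symmetric_Rayleigh_min_eigval by blast
  have neg: "(- B) *v z = - (B *v z)" for B :: "real^'k^'k" and z
    by (simp add: matrix_vector_mult_def vec_eq_iff sum_negf)
  have "- m \<in> eigvals A"
    using m(1) unfolding eigvals_def by (auto simp: neg) (metis minus_minus)
  then have "- m \<le> lam_max A"
    unfolding lam_max_def using finite_eigvals_symmetric[OF sym] by simp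
  have "quad_form A x \<le> - m * (norm x)\<^sup>2" using m(2)[of x] by (simp add: quad_form_def neg)
  also have "\<dots> \<le> lam_max A * (norm x)\<^sup>2" using \<open>- m \<le> lam_max A\<close> by (intro mult_right_mono) simp_all
  finally show ?thesis .
qed

lemma psd_lam_max_nonneg:
  fixes A :: "real^'k^'k"
  assumes "transpose A = A" and "\<And>z. 0 \<le> quad_form A z"
  shows "0 \<le> lam_max A"
proof -
  have "0 \<le> lam_max A * (norm (axis undefined 1 :: real^'k))\<^sup>2"
    using quad_form_le_lam_max[OF assms(1)] assms(2) order_trans by blast
  then show ?thesis by (simp add: zero_le_mult_iff)
qed

lemma psd_norm_matrix_vector_le:
  fixes A :: "real^'k^'k"
  assumes sym: "transpose A = A" and psd: "\<And>z. 0 \<le> quad_form A z"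
  shows "norm (A *v x) \<le> lam_max A * norm x"
proof -
  define y where "y = A *v x"
  have lam: "0 \<le> lam_max A" by (rule psd_lam_max_nonneg[OF sym psd])
  have "((norm y)\<^sup>2)\<^sup>2 \<le> quad_form A x * quad_form A y"
    using psd_quad_form_Cauchy_Schwarz[OF sym psd, of y x] by (simp add: y_def power2_norm_eq_inner)
  also have "\<dots> \<le> (lam_max A * (norm x)\<^sup>2) * (lam_max A * (norm y)\<^sup>2)"
    using lam by (intro mult_mono quad_form_le_lam_max[OF sym] psd) auto
  finally have sq: "(norm y)\<^sup>2 * (norm y)\<^sup>2 \<le> (lam_max A * norm x)\<^sup>2 * (norm y)\<^sup>2"
    by (simp add: power2_eq_square mult_ac)
  have "(norm y)\<^sup>2 \<le> (lam_max A * norm x)\<^sup>2"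
    using mult_right_le_imp_le[OF sq] by (cases "y = 0") simp_all
  then show ?thesis unfolding y_def using lam by (simp add: power2_le_iff_abs_le)
qed

lemma quad_form_axis: "quad_form A (axis i 1) = (A :: real^'k^'k) $ i $ i"
  by (simp add: quad_form_def inner_axis' matrix_vector_mult_basis column_def)

section \<open>Graph Laplacians\<close>

lemma laplacian_symmetric:
  assumes "\<And>i j. E i j = E j i"
  shows "transpose (laplacian E) = laplacian E"
  using assms by (simp add: laplacian_def transpose_def vec_eq_iff)

lemma degree_eq_sum:
  fixes E :: "'n::finite \<Rightarrow> 'n \<Rightarrow> bool"
  shows "real (degree E i) = (\<Sum>j\<in>UNIV. if E i j then 1 else 0)"
  unfolding degree_def by (simp add: sum.If_cases)

lemma laplacian_entry:
  fixes E :: "'n::finite \<Rightarrow> 'n \<Rightarrow> bool"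
  assumes "\<And>i. \<not> E i i"
  shows "laplacian E $ i $ j = (if i = j then real (degree E i) else 0) - (if E i j then 1 else 0)"
  using assms by (auto simp: laplacian_def)

lemma laplacian_row_sum:
  fixes E :: "'n::finite \<Rightarrow> 'n \<Rightarrow> bool"
  assumes "\<And>i. \<not> E i i"
  shows "(\<Sum>j\<in>UNIV. laplacian E $ i $ j) = 0"
  by (simp add: laplacian_entry[OF assms] sum_subtractf degree_eq_sum)

lemma laplacian_mult_vec_nth:
  fixes E :: "'n::finite \<Rightarrow> 'n \<Rightarrow> bool"
  assumes "\<And>i. \<not> E i i"
  shows "(laplacian E *v x) $ i = (\<Sum>j\<in>UNIV. if E i j then x $ i - x $ j else 0)"
proof -
  have "(laplacian E *v x) $ i = real (degree E i) * x $ i - (\<Sum>j\<in>UNIV. if E i j then x $ j else 0)"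
    by (simp add: matrix_vector_mult_def laplacian_entry[OF assms] left_diff_distrib sum_subtractf
        if_distrib[of "\<lambda>a. a * _"] cong: if_cong)
  also have "\<dots> = (\<Sum>j\<in>UNIV. if E i j then x $ i - x $ j else 0)"
    by (simp add: degree_eq_sum sum_distrib_right if_distrib[of "\<lambda>a. a * _"] sum_subtractf[symmetric]
        cong: if_cong) (auto intro: sum.cong)
  finally show ?thesis .
qed

lemma laplacian_quad_form:
  fixes E :: "'n::finite \<Rightarrow> 'n \<Rightarrow> bool"
  assumes sym: "\<And>i j. E i j = E j i" and irrefl: "\<And>i. \<not> E i i"
  shows "2 * quad_form (laplacian E) x = (\<Sum>i\<in>UNIV. \<Sum>j\<in>UNIV. if E i j then (x $ i - x $ j)\<^sup>2 else 0)"
proof -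
  define S where "S = (\<Sum>i\<in>UNIV. \<Sum>j\<in>UNIV. if E i j then (x $ i)\<^sup>2 - x $ i * x $ j else 0)"
  have quad: "quad_form (laplacian E) x = S"
    by (simp add: S_def quad_form_def inner_vec_def laplacian_mult_vec_nth[OF irrefl]
        sum_distrib_left if_distrib right_diff_distrib power2_eq_square cong: if_cong)
  have "S = (\<Sum>i\<in>UNIV. \<Sum>j\<in>UNIV. if E i j then (x $ j)\<^sup>2 - x $ i * x $ j else 0)"
    unfolding S_def by (subst sum.swap) (intro sum.cong refl; simp add: sym mult.commute)
  then have "2 * S
      = (\<Sum>i\<in>UNIV. \<Sum>j\<in>UNIV. (if E i j then (x $ i)\<^sup>2 - x $ i * x $ j else 0)
                            + (if E i j then (x $ j)\<^sup>2 - x $ i * x $ j else 0))"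
    by (simp add: S_def sum.distrib)
  also have "\<dots> = (\<Sum>i\<in>UNIV. \<Sum>j\<in>UNIV. if E i j then (x $ i - x $ j)\<^sup>2 else 0)"
    by (intro sum.cong refl) (simp add: power2_eq_square algebra_simps)
  finally show ?thesis unfolding quad .
qed

lemma laplacian_psd:
  fixes E :: "'n::finite \<Rightarrow> 'n \<Rightarrow> bool"
  assumes "\<And>i j. E i j = E j i" and "\<And>i. \<not> E i i"
  shows "0 \<le> quad_form (laplacian E) x"
proof -
  have "0 \<le> 2 * quad_form (laplacian E) x"
    unfolding laplacian_quad_form[OF assms] by (intro sum_nonneg) auto
  then show ?thesis by simp
qed

section \<open>Block vectors\<close>

text \<open>Vectors of \<open>n\<close> blocks in \<open>\<real>\<^sup>M\<close> are represented as functions \<open>'n \<Rightarrow> real^'m\<close>; \<open>kron_apply L e\<close>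
  is \<open>(L \<otimes> I\<^sub>M) e\<close>, and \<open>stack e\<close> is the same vector in \<open>\<real>\<^sup>M\<^sup>n\<close>.\<close>

definition kron_apply :: "real^'n^'n \<Rightarrow> ('n::finite \<Rightarrow> real^'m) \<Rightarrow> 'n \<Rightarrow> real^'m" where
  "kron_apply L e i = (\<Sum>j\<in>UNIV. L $ i $ j *\<^sub>R e j)"

definition block_column :: "('n::finite \<Rightarrow> real^'m) \<Rightarrow> 'm \<Rightarrow> real^'n" where
  "block_column e l = (\<chi> j. e j $ l)"

definition stack :: "('n::finite \<Rightarrow> real^'m::finite) \<Rightarrow> real^('n \<times> 'm)" where
  "stack e = (\<chi> p. e (fst p) $ snd p)"

lemma norm_power2_vec: "(norm (x :: real^'k))\<^sup>2 = (\<Sum>i\<in>UNIV. (x $ i)\<^sup>2)"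
  unfolding power2_norm_eq_inner inner_vec_def by (simp add: power2_eq_square)

lemma kron_apply_nth: "kron_apply L e i $ l = (L *v block_column e l) $ i"
  by (simp add: kron_apply_def block_column_def matrix_vector_mult_def)

lemma kron_apply_const:
  assumes "\<And>i. (\<Sum>j\<in>UNIV. L $ i $ j) = 0"
  shows "kron_apply L (\<lambda>_. c) i = 0"
  by (simp add: kron_apply_def assms flip: scaleR_sum_left)

lemma sum_norm_block_column: "(\<Sum>l\<in>UNIV. (norm (block_column e l))\<^sup>2) = (\<Sum>i\<in>UNIV. (norm (e i))\<^sup>2)"
  unfolding norm_power2_vec block_column_def vec_lambda_beta by (rule sum.swap)

lemma sum_norm_kron_apply:
  "(\<Sum>i\<in>UNIV. (norm (kron_apply L e i))\<^sup>2) = (\<Sum>l\<in>UNIV. (norm (L *v block_column e l))\<^sup>2)"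
  unfolding norm_power2_vec kron_apply_nth by (rule sum.swap)

lemma sum_norm_kron_apply_le:
  assumes sym: "transpose L = L" and psd: "\<And>z. 0 \<le> quad_form L z"
  shows "(\<Sum>i\<in>UNIV. (norm (kron_apply L e i))\<^sup>2) \<le> (lam_max L)\<^sup>2 * (\<Sum>i\<in>UNIV. (norm (e i))\<^sup>2)"
proof -
  have "(norm (L *v block_column e l))\<^sup>2 \<le> (lam_max L)\<^sup>2 * (norm (block_column e l))\<^sup>2" for l
    unfolding power_mult_distrib[symmetric] by (intro power_mono psd_norm_matrix_vector_le[OF sym psd]) simp
  then have "(\<Sum>l\<in>UNIV. (norm (L *v block_column e l))\<^sup>2)
      \<le> (lam_max L)\<^sup>2 * (\<Sum>l\<in>UNIV. (norm (block_column e l))\<^sup>2)"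
    unfolding sum_distrib_left by (rule sum_mono)
  then show ?thesis by (simp only: sum_norm_kron_apply sum_norm_block_column)
qed

lemma sum_UNIV_prod: "(\<Sum>p\<in>UNIV. f p) = (\<Sum>i\<in>UNIV. \<Sum>l\<in>UNIV. f (i, l))"
  by (simp add: sum.cartesian_product)

lemma norm_stack: "(norm (stack e))\<^sup>2 = (\<Sum>i\<in>UNIV. (norm (e i))\<^sup>2)"
  unfolding norm_power2_vec stack_def by (simp add: sum_UNIV_prod)

lemma stack_add: "stack (\<lambda>i. a i + b i) = stack a + stack b"
  by (simp add: stack_def vec_eq_iff)

lemma Bmat_symmetric:
  assumes "transpose L = L" and "\<And>i. transpose (G i) = G i"
  shows "transpose (Bmat L c G) = Bmat L c G"
proof -
  have "L $ i $ j = L $ j $ i" for i j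
    using assms(1) by (metis transpose_def vec_lambda_beta)
  moreover have "G k $ i $ j = G k $ j $ i" for k i j
    using assms(2) by (metis transpose_def vec_lambda_beta)
  ultimately show ?thesis by (simp add: Bmat_def transpose_def vec_eq_iff)
qed

lemma Bmat_mult_stack_nth:
  fixes L :: "real^'n::finite^'n" and G :: "'n \<Rightarrow> real^'m::finite^'m"
  shows "(Bmat L c G *v stack e) $ (i, l) = kron_apply L e i $ l + c * (G i *v e i) $ l"
proof -
  have delta_l: "(\<Sum>l'\<in>UNIV. f l' * (if l = l' then 1 else 0) * g l') = f l * g l"
    for f g :: "'m \<Rightarrow> real"
    by (simp add: if_distrib[of "\<lambda>a. _ * a * _"] cong: if_cong)
  have delta_i: "(\<Sum>j\<in>UNIV. c * (if i = j then G i $ l $ l' else 0) * g j) = c * G i $ l $ l' * g i"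
    for g :: "'n \<Rightarrow> real" and l'
    by (simp add: if_distrib[of "\<lambda>a. _ * a * _"] cong: if_cong)
  have "(Bmat L c G *v stack e) $ (i, l)
      = (\<Sum>j\<in>UNIV. \<Sum>l'\<in>UNIV. L $ i $ j * (if l = l' then 1 else 0) * e j $ l')
        + (\<Sum>l'\<in>UNIV. \<Sum>j\<in>UNIV. c * (if i = j then G i $ l $ l' else 0) * e j $ l')"
    unfolding Bmat_def matrix_vector_mult_def stack_def sum_UNIV_prod vec_lambda_beta fst_conv snd_conv
    unfolding distrib_right sum.distrib by (subst (2) sum.swap) (rule refl)
  also have "\<dots> = kron_apply L e i $ l + c * (G i *v e i) $ l"
    by (simp only: delta_l delta_i) (simp add: kron_apply_def matrix_vector_mult_def sum_distrib_left mult_ac)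
  finally show ?thesis .
qed

lemma quad_form_Bmat_stack:
  fixes L :: "real^'n::finite^'n" and G :: "'n \<Rightarrow> real^'m::finite^'m"
  shows "quad_form (Bmat L c G) (stack e)
     = (\<Sum>i\<in>UNIV. e i \<bullet> kron_apply L e i) + c * (\<Sum>i\<in>UNIV. e i \<bullet> (G i *v e i))"
  unfolding quad_form_def inner_vec_def sum_UNIV_prod Bmat_mult_stack_nth
  by (simp add: stack_def distrib_left sum.distrib sum_distrib_left mult_ac)

lemma sum_norm_add_le:
  fixes a b x :: "'n::finite \<Rightarrow> real^'m::finite"
  assumes a: "(\<Sum>i\<in>UNIV. (norm (a i))\<^sup>2) \<le> p\<^sup>2 * (\<Sum>i\<in>UNIV. (norm (x i))\<^sup>2)"
    and b: "(\<Sum>i\<in>UNIV. (norm (b i))\<^sup>2) \<le> q\<^sup>2 * (\<Sum>i\<in>UNIV. (norm (x i))\<^sup>2)"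
    and "0 \<le> p" "0 \<le> q"
  shows "(\<Sum>i\<in>UNIV. (norm (a i + b i))\<^sup>2) \<le> (p + q)\<^sup>2 * (\<Sum>i\<in>UNIV. (norm (x i))\<^sup>2)"
proof -
  have "norm (stack a) \<le> p * norm (stack x)" "norm (stack b) \<le> q * norm (stack x)"
    using a b \<open>0 \<le> p\<close> \<open>0 \<le> q\<close>
    by (simp_all add: power2_le_iff_abs_le flip: norm_stack power_mult_distrib)
  then have "norm (stack (\<lambda>i. a i + b i)) \<le> (p + q) * norm (stack x)"
    unfolding stack_add by (metis distrib_right norm_triangle_le add_mono)
  then show ?thesis
    using \<open>0 \<le> p\<close> \<open>0 \<le> q\<close> by (simp add: power_mono flip: norm_stack power_mult_distrib)
qed

section \<open>Square-integrable random vectors and independence\<close>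

lemma borel_measurable_vec_lambda:
  fixes f :: "'a \<Rightarrow> 'k::finite \<Rightarrow> 'b::euclidean_space"
  assumes "\<And>l. (\<lambda>\<omega>. f \<omega> l) \<in> borel_measurable M"
  shows "(\<lambda>\<omega>. \<chi> l. f \<omega> l) \<in> borel_measurable M"
  unfolding borel_measurable_euclidean_space[where 'c="'b^'k"]
  by (auto simp: Basis_vec_def inner_axis' inner_commute intro!: borel_measurable_inner assms)

lemma borel_measurable_vec_nth:
  fixes f :: "'a \<Rightarrow> 'b::real_normed_vector^'k"
  assumes "f \<in> borel_measurable M"
  shows "(\<lambda>\<omega>. f \<omega> $ i) \<in> borel_measurable M"
  using measurable_compose[OF assms borel_measurable_continuous_onI[OF
        linear_continuous_on[OF bounded_linear_vec_nth[of i]]]] .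

context prob_space
begin

definition square_integrable :: "('a \<Rightarrow> 'b::euclidean_space) \<Rightarrow> bool" where
  "square_integrable f \<longleftrightarrow> f \<in> borel_measurable M \<and> integrable M (\<lambda>\<omega>. (norm (f \<omega>))\<^sup>2)"

definition bounded_rv :: "('a \<Rightarrow> 'b::euclidean_space) \<Rightarrow> bool" where
  "bounded_rv f \<longleftrightarrow> f \<in> borel_measurable M \<and> bounded (f ` space M)"

lemma integrable_norm_le:
  fixes f :: "'a \<Rightarrow> 'b::euclidean_space"
  assumes "integrable M g" "f \<in> borel_measurable M" "\<And>\<omega>. \<omega> \<in> space M \<Longrightarrow> norm (f \<omega>) \<le> g \<omega>"
  shows "integrable M f"
  using assms by (intro Bochner_Integration.integrable_bound[OF assms(1,2)] AE_I2) force

lemma square_integrable_add: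
  assumes f: "square_integrable f" and g: "square_integrable g"
  shows "square_integrable (\<lambda>\<omega>. f \<omega> + g \<omega>)"
  unfolding square_integrable_def
proof
  show meas: "(\<lambda>\<omega>. f \<omega> + g \<omega>) \<in> borel_measurable M"
    using f g unfolding square_integrable_def by (simp add: borel_measurable_add)
  show "integrable M (\<lambda>\<omega>. (norm (f \<omega> + g \<omega>))\<^sup>2)"
  proof (rule integrable_norm_le)
    show "integrable M (\<lambda>\<omega>. 2 * (norm (f \<omega>))\<^sup>2 + 2 * (norm (g \<omega>))\<^sup>2)"
      using f g unfolding square_integrable_def by simp
    show "(\<lambda>\<omega>. (norm (f \<omega> + g \<omega>))\<^sup>2) \<in> borel_measurable M"
      using meas by measurable
    fix \<omega>
    have "(norm (f \<omega> + g \<omega>))\<^sup>2 \<le> (norm (f \<omega>) + norm (g \<omega>))\<^sup>2"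
      by (intro power_mono norm_triangle_ineq) simp
    also have "\<dots> \<le> 2 * (norm (f \<omega>))\<^sup>2 + 2 * (norm (g \<omega>))\<^sup>2"
      using sum_squares_bound[of "norm (f \<omega>)" "norm (g \<omega>)"] unfolding power2_sum by linarith
    finally show "norm ((norm (f \<omega> + g \<omega>))\<^sup>2) \<le> 2 * (norm (f \<omega>))\<^sup>2 + 2 * (norm (g \<omega>))\<^sup>2" by simp
  qed
qed

lemma square_integrable_const: "square_integrable (\<lambda>\<omega>. c)"
  by (simp add: square_integrable_def)

lemma square_integrable_sum:
  "(\<And>j. j \<in> J \<Longrightarrow> square_integrable (f j)) \<Longrightarrow> square_integrable (\<lambda>\<omega>. \<Sum>j\<in>J. f j \<omega>)"
proof (induction J rule: infinite_finite_induct)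
  case (insert j J)
  then show ?case using square_integrable_add[of "f j" "\<lambda>\<omega>. \<Sum>j\<in>J. f j \<omega>"] by simp
qed (simp_all add: square_integrable_const)

lemma square_integrable_norm_le:
  fixes f :: "'a \<Rightarrow> 'c::euclidean_space" and g :: "'a \<Rightarrow> 'b::euclidean_space"
  assumes f: "square_integrable f" and g: "g \<in> borel_measurable M"
    and le: "\<And>\<omega>. \<omega> \<in> space M \<Longrightarrow> norm (g \<omega>) \<le> C * norm (f \<omega>)"
  shows "square_integrable g"
  unfolding square_integrable_def
proof
  show "integrable M (\<lambda>\<omega>. (norm (g \<omega>))\<^sup>2)"
  proof (rule integrable_norm_le)
    show "integrable M (\<lambda>\<omega>. C\<^sup>2 * (norm (f \<omega>))\<^sup>2)"
      using f unfolding square_integrable_def by simp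
    show "(\<lambda>\<omega>. (norm (g \<omega>))\<^sup>2) \<in> borel_measurable M" using g by measurable
    fix \<omega> assume "\<omega> \<in> space M"
    then have "(norm (g \<omega>))\<^sup>2 \<le> (C * norm (f \<omega>))\<^sup>2" by (intro power_mono le norm_ge_zero)
    then show "norm ((norm (g \<omega>))\<^sup>2) \<le> C\<^sup>2 * (norm (f \<omega>))\<^sup>2" by (simp add: power_mult_distrib)
  qed
qed (rule g)

lemma square_integrable_bounded_linear:
  assumes T: "bounded_linear T" and f: "square_integrable f"
  shows "square_integrable (\<lambda>\<omega>. T (f \<omega>))"
proof -
  obtain K where K: "\<And>x. norm (T x) \<le> norm x * K" using bounded_linear.bounded[OF T] by blast
  have "(\<lambda>\<omega>. T (f \<omega>)) \<in> borel_measurable M"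
    using f measurable_compose borel_measurable_continuous_onI[OF linear_continuous_on[OF T]]
    unfolding square_integrable_def by blast
  then show ?thesis
    using K by (intro square_integrable_norm_le[OF f]) (simp_all add: mult.commute)
qed

lemma square_integrable_scaleR: "square_integrable f \<Longrightarrow> square_integrable (\<lambda>\<omega>. c *\<^sub>R f \<omega>)"
  by (rule square_integrable_bounded_linear) (simp add: bounded_linear_scaleR_right)

lemma square_integrable_diff:
  "square_integrable f \<Longrightarrow> square_integrable g \<Longrightarrow> square_integrable (\<lambda>\<omega>. f \<omega> - g \<omega>)"
  using square_integrable_add[OF _ square_integrable_scaleR[of g "-1"], of f] by simp

lemma square_integrable_scaleR_bounded:
  assumes f: "square_integrable (f :: 'a \<Rightarrow> real)" and c: "bounded_rv c"
  shows "square_integrable (\<lambda>\<omega>. f \<omega> *\<^sub>R c \<omega>)"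
proof -
  obtain C where c_meas: "c \<in> borel_measurable M" and C: "\<And>\<omega>. \<omega> \<in> space M \<Longrightarrow> norm (c \<omega>) \<le> C"
    using c unfolding bounded_rv_def bounded_iff by auto
  show ?thesis
  proof (rule square_integrable_norm_le[OF f])
    show "(\<lambda>\<omega>. f \<omega> *\<^sub>R c \<omega>) \<in> borel_measurable M"
      using f c_meas unfolding square_integrable_def by (simp add: borel_measurable_scaleR)
    show "norm (f \<omega> *\<^sub>R c \<omega>) \<le> C * norm (f \<omega>)" if "\<omega> \<in> space M" for \<omega>
      using mult_left_mono[OF C[OF that], of "\<bar>f \<omega>\<bar>"] by (simp add: mult.commute)
  qed
qed

lemma square_integrable_inner_bounded:
  assumes b: "bounded_rv b" and x: "square_integrable x"
  shows "square_integrable (\<lambda>\<omega>. b \<omega> \<bullet> x \<omega>)"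
proof -
  obtain B where b_meas: "b \<in> borel_measurable M" and B: "\<And>\<omega>. \<omega> \<in> space M \<Longrightarrow> norm (b \<omega>) \<le> B"
    using b unfolding bounded_rv_def bounded_iff by auto
  show ?thesis
  proof (rule square_integrable_norm_le[OF x])
    show "(\<lambda>\<omega>. b \<omega> \<bullet> x \<omega>) \<in> borel_measurable M"
      using x b_meas unfolding square_integrable_def by (simp add: borel_measurable_inner)
    show "norm (b \<omega> \<bullet> x \<omega>) \<le> B * norm (x \<omega>)" if "\<omega> \<in> space M" for \<omega>
      using Cauchy_Schwarz_ineq2[of "b \<omega>" "x \<omega>"] B[OF that]
      by (simp add: mult_right_mono order_trans)
  qed
qed

lemma bounded_rv_square_integrable:
  assumes "bounded_rv f" shows "square_integrable f"
proof -
  obtain C where "f \<in> borel_measurable M" and "\<And>\<omega>. \<omega> \<in> space M \<Longrightarrow> norm (f \<omega>) \<le> C"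
    using assms unfolding bounded_rv_def bounded_iff by auto
  then show ?thesis
    by (intro square_integrable_norm_le[OF square_integrable_const[of "1 :: real"]]) simp_all
qed

lemma integrable_inner_square_integrable:
  assumes x: "square_integrable x" and y: "square_integrable y"
  shows "integrable M (\<lambda>\<omega>. x \<omega> \<bullet> y \<omega>)"
proof (rule integrable_norm_le)
  show "integrable M (\<lambda>\<omega>. (norm (x \<omega>))\<^sup>2 + (norm (y \<omega>))\<^sup>2)"
    using x y unfolding square_integrable_def by simp
  show "(\<lambda>\<omega>. x \<omega> \<bullet> y \<omega>) \<in> borel_measurable M"
    using x y unfolding square_integrable_def by (simp add: borel_measurable_inner)
  fix \<omega>
  have "norm (x \<omega> \<bullet> y \<omega>) \<le> norm (x \<omega>) * norm (y \<omega>)" by (simp add: Cauchy_Schwarz_ineq2)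
  also have "\<dots> \<le> (norm (x \<omega>))\<^sup>2 + (norm (y \<omega>))\<^sup>2"
    using sum_squares_bound[of "norm (x \<omega>)" "norm (y \<omega>)"]
      mult_nonneg_nonneg[OF norm_ge_zero norm_ge_zero, of "x \<omega>" "y \<omega>"] by linarith
  finally show "norm (x \<omega> \<bullet> y \<omega>) \<le> (norm (x \<omega>))\<^sup>2 + (norm (y \<omega>))\<^sup>2" .
qed

lemma indep_set_from_indep_sets:
  assumes "indep_sets F I" "i \<in> I" "j \<in> I" "i \<noteq> j"
  shows "indep_set (F i) (F j)"
  unfolding indep_sets2_eq
proof (intro conjI ballI)
  show "F i \<subseteq> events" "F j \<subseteq> events" using assms(1-3) unfolding indep_sets_def by auto
  fix a b assume "a \<in> F i" "b \<in> F j"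
  then have "prob (\<Inter>k\<in>{i, j}. if k = i then a else b) = (\<Prod>k\<in>{i, j}. prob (if k = i then a else b))"
    using assms by (intro indep_setsD[OF assms(1)]) auto
  then show "prob (a \<inter> b) = prob a * prob b" using assms(4) by (simp add: Int_commute)
qed

lemma indep_set_imp_indep_var:
  assumes ind: "indep_set (sets F) (sets G)" and "space F = space M" "space G = space M"
    and f: "f \<in> borel_measurable F" and g: "g \<in> borel_measurable G"
  shows "indep_var borel f borel g"
  unfolding indep_var_eq
proof (intro conjI)
  have sub: "sets F \<subseteq> events" "sets G \<subseteq> events"
    using indep_setD_ev1[OF ind] indep_setD_ev2[OF ind] by auto
  show "random_variable borel f" "random_variable borel g"
    using measurable_mono[OF order_refl refl sub(1) assms(2)] measurable_mono[OF order_refl refl sub(2) assms(3)]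
      f g by blast+
  have "sigma_sets (space M) {f -` A \<inter> space M |A. A \<in> sets borel} \<subseteq> sets F"
    "sigma_sets (space M) {g -` A \<inter> space M |A. A \<in> sets borel} \<subseteq> sets G"
    using measurable_sets[OF f] measurable_sets[OF g] assms(2,3)
    by (auto intro!: sets.sigma_sets_subset[where M=F, simplified assms(2)]
                     sets.sigma_sets_subset[where M=G, simplified assms(3)])
  then show "indep_set (sigma_sets (space M) {f -` A \<inter> space M |A. A \<in> sets borel})
      (sigma_sets (space M) {g -` A \<inter> space M |A. A \<in> sets borel})"
    using ind unfolding indep_sets2_eq by blast
qed

lemma indep_set_integral_mult:
  fixes f g :: "'a \<Rightarrow> real"
  assumes "indep_set (sets F) (sets G)" "space F = space M" "space G = space M"
    and "f \<in> borel_measurable F" "g \<in> borel_measurable G" "integrable M f" "integrable M g"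
  shows "integrable M (\<lambda>\<omega>. f \<omega> * g \<omega>)"
    and "(\<integral>\<omega>. f \<omega> * g \<omega> \<partial>M) = integral\<^sup>L M f * integral\<^sup>L M g"
  using indep_var_integrable indep_var_lebesgue_integral indep_set_imp_indep_var[OF assms(1-5)] assms(6,7)
  by auto

lemma integral_quad_form_indep:
  fixes x :: "'a \<Rightarrow> real^'k" and A :: "'a \<Rightarrow> real^'k^'k"
  assumes ind: "indep_set (sets F) (sets G)" and sp: "space F = space M" "space G = space M"
    and x: "x \<in> borel_measurable F" "square_integrable x"
    and A: "A \<in> borel_measurable G" "\<And>l l'. integrable M (\<lambda>\<omega>. A \<omega> $ l $ l')"
  shows "(\<integral>\<omega>. x \<omega> \<bullet> (A \<omega> *v x \<omega>) \<partial>M)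
       = (\<integral>\<omega>. x \<omega> \<bullet> ((\<chi> l l'. \<integral>\<omega>. A \<omega> $ l $ l' \<partial>M) *v x \<omega>) \<partial>M)"
proof -
  have expand: "y \<bullet> (B *v y) = (\<Sum>l\<in>UNIV. \<Sum>l'\<in>UNIV. (y $ l * y $ l') * B $ l $ l')"
    for y :: "real^'k" and B :: "real^'k^'k"
    by (simp add: inner_vec_def matrix_vector_mult_def sum_distrib_left mult_ac)
  have xx_meas: "(\<lambda>\<omega>. x \<omega> $ l * x \<omega> $ l') \<in> borel_measurable F" for l l'
    using x(1) by (intro borel_measurable_times borel_measurable_vec_nth)
  have A_meas: "(\<lambda>\<omega>. A \<omega> $ l $ l') \<in> borel_measurable G" for l l'
    using A(1) by (intro borel_measurable_vec_nth)+
  have comp: "square_integrable (\<lambda>\<omega>. x \<omega> $ l)" for l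
    using square_integrable_bounded_linear[OF bounded_linear_vec_nth x(2)] by simp
  have xx_int: "integrable M (\<lambda>\<omega>. x \<omega> $ l * x \<omega> $ l')" for l l'
    using integrable_inner_square_integrable[OF comp comp] by simp
  note indep = indep_set_integral_mult[OF ind sp xx_meas A_meas xx_int A(2)]
  show ?thesis
    unfolding expand using indep xx_int by (simp add: Bochner_Integration.integral_sum)
qed

end

section \<open>The distributed estimator\<close>

lemma measurable_sigma_gen_events:
  fixes f :: "'a \<Rightarrow> 'b::topological_space"
  assumes "gen_events M f \<subseteq> A" and "A \<subseteq> Pow (space M)"
  shows "f \<in> borel_measurable (sigma (space M) A)"
proof (rule measurableI)
  fix B :: "'b set" assume "B \<in> sets borel"
  then have "f -` B \<inter> space M \<in> A" using assms(1) unfolding gen_events_def by blast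
  then show "f -` B \<inter> space (sigma (space M) A) \<in> sets (sigma (space M) A)"
    using assms(2) by (simp add: sets_measure_of sigma_sets.Basic)
qed simp

lemma sigma_sets_Pow: "A \<subseteq> Pow \<Omega> \<Longrightarrow> sigma_sets \<Omega> A \<subseteq> Pow \<Omega>"
  by (meson PowI sigma_sets_into_sp subsetI)

lemma sets_sigma_sigma_sets: "G \<subseteq> Pow \<Omega> \<Longrightarrow> sets (sigma \<Omega> (sigma_sets \<Omega> G)) = sigma_sets \<Omega> G"
  by (simp add: sets_measure_of sigma_sets_Pow sigma_sets_sigma_sets_eq)

lemma past_events_Pow: "past_events M \<theta>0 X v t \<subseteq> Pow (space M)"
  unfolding past_events_def
  by (rule sigma_sets_Pow) (auto simp: gen_events_def)

lemma input_events_Pow: "input_events M X t \<subseteq> Pow (space M)"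
  unfolding input_events_def
  by (rule sigma_sets_Pow) (auto simp: gen_events_def)

lemma noise_events_Pow: "noise_events M v t \<subseteq> Pow (space M)"
  unfolding noise_events_def
  by (rule sigma_sets_Pow) (auto simp: gen_events_def)

locale distributed_estimation = prob_space M for M :: "'a measure" +
  fixes \<phi> :: "real^'d \<Rightarrow> real^'d \<Rightarrow> real"
    and feat :: "'m::finite \<Rightarrow> real^'d"
    and \<theta> :: "real^'m"
    and \<theta>0 :: "'n::finite \<Rightarrow> 'a \<Rightarrow> real^'m"
    and X :: "nat \<Rightarrow> 'n \<Rightarrow> 'c::finite \<Rightarrow> 'a \<Rightarrow> real^'d"
    and v :: "nat \<Rightarrow> 'n \<Rightarrow> 'c \<Rightarrow> 'a \<Rightarrow> real"
    and \<sigma>v :: real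
    and E :: "'n \<Rightarrow> 'n \<Rightarrow> bool"
    and \<alpha> :: real
  assumes phi_bound: "\<And>x w. \<bar>\<phi> x w\<bar> \<le> sqrt 2"
    and phi_meas: "\<And>w. (\<lambda>x. \<phi> x w) \<in> borel_measurable borel"
    and theta0_L2: "\<And>i. integrable M (\<lambda>\<omega>. (norm (\<theta>0 i \<omega>))\<^sup>2)"
    and theta0_rv: "\<And>i. \<theta>0 i \<in> borel_measurable M"
    and X_rv: "\<And>t i k. X t i k \<in> borel_measurable M"
    and X_stationary: "\<And>t. distr M (PiM UNIV (\<lambda>_. borel)) (\<lambda>\<omega> p. X t (fst p) (snd p) \<omega>)
                          = distr M (PiM UNIV (\<lambda>_. borel)) (\<lambda>\<omega> p. X 0 (fst p) (snd p) \<omega>)"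
    and v_rv: "\<And>t i k. v t i k \<in> borel_measurable M"
    and v_mean: "\<And>t i k. integral\<^sup>L M (v t i k) = 0"
    and v_int2: "\<And>t i k k'. integrable M (\<lambda>\<omega>. v t i k \<omega> * v t i k' \<omega>)"
    and v_cov: "\<And>t i k k'. integral\<^sup>L M (\<lambda>\<omega>. v t i k \<omega> * v t i k' \<omega>)
                             = (if k = k' then \<sigma>v\<^sup>2 else 0)"
    and indep: "\<And>t. indep_sets
                  (\<lambda>b::nat. if b = 0 then past_events M \<theta>0 X v t
                            else if b = 1 then input_events M X t
                            else noise_events M v t) {0, 1, 2}"
    and E_sym: "\<And>i j. E i j = E j i"
    and E_irrefl: "\<And>i. \<not> E i i"
    and alpha_pos: "0 < \<alpha>"
begin

definition err :: "nat \<Rightarrow> 'n \<Rightarrow> 'a \<Rightarrow> real^'m" where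
  "err t i \<omega> = est (mat 1 - \<alpha> *\<^sub>R laplacian E) \<alpha> \<phi> feat \<theta> \<theta>0 X v t i \<omega> - \<theta>"

definition regressor :: "nat \<Rightarrow> 'n \<Rightarrow> 'c \<Rightarrow> 'a \<Rightarrow> real^'m" where
  "regressor t i k \<omega> = Hrow \<phi> feat X t i k \<omega>"

text \<open>\<open>gram t i\<close> is \<open>H\<^sub>i\<^sub>,\<^sub>t\<^sup>T H\<^sub>i\<^sub>,\<^sub>t\<close> and \<open>noise_input t i\<close> is \<open>H\<^sub>i\<^sub>,\<^sub>t\<^sup>T v\<^sub>i\<^sub>,\<^sub>t\<close>.\<close>

definition gram :: "nat \<Rightarrow> 'n \<Rightarrow> 'a \<Rightarrow> real^'m^'m" where
  "gram t i \<omega> = (\<chi> l l'. \<Sum>k\<in>UNIV. regressor t i k \<omega> $ l * regressor t i k \<omega> $ l')"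

definition noise_input :: "nat \<Rightarrow> 'n \<Rightarrow> 'a \<Rightarrow> real^'m" where
  "noise_input t i \<omega> = (\<Sum>k\<in>UNIV. v t i k \<omega> *\<^sub>R regressor t i k \<omega>)"

definition drift :: "nat \<Rightarrow> 'n \<Rightarrow> 'a \<Rightarrow> real^'m" where
  "drift t i \<omega> = kron_apply (laplacian E) (\<lambda>j. err t j \<omega>) i + gram t i \<omega> *v err t i \<omega>"

lemma gram_mult_vec: "gram t i \<omega> *v x = (\<Sum>k\<in>UNIV. (regressor t i k \<omega> \<bullet> x) *\<^sub>R regressor t i k \<omega>)"
proof -
  have "(gram t i \<omega> *v x) $ l = (\<Sum>k\<in>UNIV. (regressor t i k \<omega> \<bullet> x) * regressor t i k \<omega> $ l)" for l
    unfolding gram_def matrix_vector_mult_def inner_vec_def vec_lambda_beta sum_distrib_right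
    by (subst sum.swap) (simp add: sum_distrib_left mult_ac)
  then show ?thesis by (simp add: vec_eq_iff sum_component)
qed

lemma err_0: "err 0 i \<omega> = \<theta>0 i \<omega> - \<theta>"
  by (simp add: err_def)

lemma err_Suc: "err (Suc t) i \<omega> = err t i \<omega> - \<alpha> *\<^sub>R drift t i \<omega> + \<alpha> *\<^sub>R noise_input t i \<omega>"
proof -
  define est' where "est' j = est (mat 1 - \<alpha> *\<^sub>R laplacian E) \<alpha> \<phi> feat \<theta> \<theta>0 X v t j \<omega>" for j
  have est': "est' = (\<lambda>j. err t j \<omega> + \<theta>)" by (simp add: fun_eq_iff est'_def err_def)
  have "(\<Sum>j\<in>UNIV. (mat 1 :: real^'n^'n) $ i $ j *\<^sub>R est' j) = est' i"
    by (simp add: mat_def if_distrib[of "\<lambda>a. a *\<^sub>R _"] cong: if_cong)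
  then have mix: "(\<Sum>j\<in>UNIV. (mat 1 - \<alpha> *\<^sub>R laplacian E) $ i $ j *\<^sub>R est' j)
      = est' i - \<alpha> *\<^sub>R kron_apply (laplacian E) est' i"
    by (simp add: kron_apply_def scaleR_diff_left sum_subtractf scaleR_sum_right)
  \<comment> \<open>the consensus step fixes the common value \<open>\<theta>\<close>, as the rows of the Laplacian sum to zero\<close>
  have kron: "kron_apply (laplacian E) est' i = kron_apply (laplacian E) (\<lambda>j. err t j \<omega>) i"
    using kron_apply_const[of "laplacian E" \<theta> i, OF laplacian_row_sum[OF E_irrefl]]
    by (simp add: est' kron_apply_def scaleR_add_right sum.distrib)
  have innovation: "(\<Sum>k\<in>UNIV. (obs \<phi> feat \<theta> X v t i k \<omega> - Hrow \<phi> feat X t i k \<omega> \<bullet> est' i)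
       *\<^sub>R Hrow \<phi> feat X t i k \<omega>) = noise_input t i \<omega> - gram t i \<omega> *v err t i \<omega>"
    by (simp add: gram_mult_vec noise_input_def obs_def regressor_def est' inner_add_right
        algebra_simps sum_subtractf[symmetric] sum.distrib[symmetric])
  have "err (Suc t) i \<omega> = (\<Sum>j\<in>UNIV. (mat 1 - \<alpha> *\<^sub>R laplacian E) $ i $ j *\<^sub>R est' j)
      + \<alpha> *\<^sub>R (\<Sum>k\<in>UNIV. (obs \<phi> feat \<theta> X v t i k \<omega> - Hrow \<phi> feat X t i k \<omega> \<bullet> est' i)
          *\<^sub>R Hrow \<phi> feat X t i k \<omega>) - \<theta>"
    by (simp add: err_def est'_def)
  then show ?thesis
    unfolding mix kron innovation by (simp add: est' drift_def algebra_simps)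
qed

definition past :: "nat \<Rightarrow> 'a measure" where
  "past t = sigma (space M) (past_events M \<theta>0 X v t)"

definition input :: "nat \<Rightarrow> 'a measure" where
  "input t = sigma (space M) (input_events M X t)"

definition noise :: "nat \<Rightarrow> 'a measure" where
  "noise t = sigma (space M) (noise_events M v t)"

definition past_input :: "nat \<Rightarrow> 'a measure" where
  "past_input t = sigma (space M) (past_events M \<theta>0 X v t \<union> input_events M X t)"

lemma space_generated [simp]:
  "space (past t) = space M" "space (input t) = space M" "space (noise t) = space M"
  "space (past_input t) = space M"
  by (simp_all add: past_def input_def noise_def past_input_def space_measure_of_conv)

lemma sets_generated:
  "sets (past t) = past_events M \<theta>0 X v t" "sets (input t) = input_events M X t"
  "sets (noise t) = noise_events M v t"
  "sets (past_input t) = sigma_sets (space M) (past_events M \<theta>0 X v t \<union> input_events M X t)"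
proof -
  show "sets (past t) = past_events M \<theta>0 X v t"
    unfolding past_def past_events_def by (rule sets_sigma_sigma_sets) (auto simp: gen_events_def)
  show "sets (input t) = input_events M X t"
    unfolding input_def input_events_def by (rule sets_sigma_sigma_sets) (auto simp: gen_events_def)
  show "sets (noise t) = noise_events M v t"
    unfolding noise_def noise_events_def by (rule sets_sigma_sigma_sets) (auto simp: gen_events_def)
  show "sets (past_input t) = sigma_sets (space M) (past_events M \<theta>0 X v t \<union> input_events M X t)"
    unfolding past_input_def by (rule sets_measure_of) (use past_events_Pow input_events_Pow in blast)
qed

lemma indep_past_input: "indep_set (sets (past t)) (sets (input t))"
  using indep_set_from_indep_sets[OF indep[of t], of 0 1] by (simp add: sets_generated)

lemma indep_input_noise: "indep_set (sets (input t)) (sets (noise t))"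
  using indep_set_from_indep_sets[OF indep[of t], of 1 2] by (simp add: sets_generated)

lemma indep_past_input_noise: "indep_set (sets (past_input t)) (sets (noise t))"
proof -
  define F where "F = (\<lambda>b::nat. if b = 0 then past_events M \<theta>0 X v t
                                 else if b = 1 then input_events M X t else noise_events M v t)"
  define I where "I = (\<lambda>b. if b then {0, 1} else {2 :: nat})"
  have "indep_sets (\<lambda>b. sigma_sets (space M) (\<Union>k\<in>I b. F k)) UNIV"
  proof (rule indep_sets_collect_sigma)
    show "indep_sets F (\<Union>b. I b)"
      using indep[of t] by (simp add: F_def I_def UNIV_bool insert_commute)
    show "Int_stable (F k)" for k
      unfolding F_def Int_stable_def by (auto simp flip: sets_generated)
    show "disjoint_family_on I UNIV" by (auto simp: disjoint_family_on_def I_def)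
  qed
  then have "indep_set (sigma_sets (space M) (F 0 \<union> F 1)) (sigma_sets (space M) (F 2))"
    unfolding indep_set_def
    by (rule indep_sets_mono_sets) (auto simp: I_def split: bool.split)
  moreover have "sigma_sets (space M) (F 2) = F 2"
    unfolding F_def noise_events_def by (simp, rule sigma_sets_sigma_sets_eq) (auto simp: gen_events_def)
  ultimately show ?thesis by (simp add: sets_generated F_def)
qed

lemma regressor_nth: "regressor t i k \<omega> $ l = \<phi> (X t i k \<omega>) (feat l)"
  by (simp add: regressor_def Hrow_def)

lemma regressor_measurable:
  assumes "X t i k \<in> borel_measurable N"
  shows "regressor t i k \<in> borel_measurable N"
proof -
  have "(\<lambda>x. \<chi> l. \<phi> x (feat l)) \<in> borel_measurable borel"
    by (rule borel_measurable_vec_lambda) (rule phi_meas)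
  moreover have "regressor t i k = (\<lambda>\<omega>. \<chi> l. \<phi> (X t i k \<omega>) (feat l))"
    by (simp add: fun_eq_iff regressor_def Hrow_def)
  ultimately show ?thesis using measurable_compose[OF assms] by simp
qed

lemma gram_measurable:
  assumes "\<And>k. regressor t i k \<in> borel_measurable N"
  shows "gram t i \<in> borel_measurable N"
proof -
  have "gram t i = (\<lambda>\<omega>. \<chi> l l'. \<Sum>k\<in>UNIV. regressor t i k \<omega> $ l * regressor t i k \<omega> $ l')"
    by (simp add: fun_eq_iff gram_def)
  then show ?thesis
    by (simp only:) (intro borel_measurable_vec_lambda borel_measurable_sum borel_measurable_times
        borel_measurable_vec_nth assms)
qed

lemma drift_measurable:
  assumes "\<And>j. err t j \<in> borel_measurable N" and "\<And>k. regressor t i k \<in> borel_measurable N"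
  shows "drift t i \<in> borel_measurable N"
  unfolding drift_def kron_apply_def gram_mult_vec
  by (intro borel_measurable_add borel_measurable_sum borel_measurable_scaleR borel_measurable_inner
      borel_measurable_const assms)

lemma noise_input_measurable:
  assumes "\<And>k. v t i k \<in> borel_measurable N" and "\<And>k. regressor t i k \<in> borel_measurable N"
  shows "noise_input t i \<in> borel_measurable N"
  unfolding noise_input_def by (intro borel_measurable_sum borel_measurable_scaleR assms)

lemma X_measurable_input: "X t i k \<in> borel_measurable (input t)"
  unfolding input_def
  by (rule measurable_sigma_gen_events[OF _ input_events_Pow]) (auto simp: input_events_def)

lemma v_measurable_noise: "v t i k \<in> borel_measurable (noise t)"
  unfolding noise_def
  by (rule measurable_sigma_gen_events[OF _ noise_events_Pow]) (auto simp: noise_events_def)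

lemma X_measurable_past: "s < t \<Longrightarrow> X s i k \<in> borel_measurable (past t)"
  unfolding past_def
  by (rule measurable_sigma_gen_events[OF _ past_events_Pow]) (auto simp: past_events_def)

lemma v_measurable_past: "s < t \<Longrightarrow> v s i k \<in> borel_measurable (past t)"
  unfolding past_def
  by (rule measurable_sigma_gen_events[OF _ past_events_Pow]) (auto simp: past_events_def)

lemma theta0_measurable_past: "\<theta>0 i \<in> borel_measurable (past t)"
  unfolding past_def
  by (rule measurable_sigma_gen_events[OF _ past_events_Pow]) (auto simp: past_events_def)

lemma subalgebra_past_Suc: "subalgebra (past (Suc t)) (past t)"
  unfolding subalgebra_def sets_generated past_events_def by (auto intro!: sigma_sets_mono')

lemma err_measurable_past: "err t i \<in> borel_measurable (past t)"
proof (induction t arbitrary: i)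
  case 0
  show ?case
    unfolding err_0 by (intro borel_measurable_diff theta0_measurable_past borel_measurable_const)
next
  case (Suc t)
  have "err t j \<in> borel_measurable (past (Suc t))" for j
    by (rule measurable_from_subalg[OF subalgebra_past_Suc Suc.IH])
  moreover have "regressor t i k \<in> borel_measurable (past (Suc t))" for k
    by (intro regressor_measurable X_measurable_past) simp
  moreover have "v t i k \<in> borel_measurable (past (Suc t))" for k
    by (intro v_measurable_past) simp
  ultimately show ?case
    unfolding err_Suc by (intro borel_measurable_add borel_measurable_diff borel_measurable_scaleR
        borel_measurable_const drift_measurable noise_input_measurable)
qed

lemma subalgebra_past_input: "subalgebra (past_input t) (past t)" "subalgebra (past_input t) (input t)"
  by (auto simp: subalgebra_def sets_generated intro: sigma_sets.Basic)

lemma phi_square_le: "(\<phi> x w)\<^sup>2 \<le> 2"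
  using power_mono[OF phi_bound[of x w], of 2] by simp

lemma norm_regressor_le: "(norm (regressor t i k \<omega>))\<^sup>2 \<le> 2 * real CARD('m)"
proof -
  have "(\<Sum>l\<in>UNIV. (\<phi> (X t i k \<omega>) (feat l))\<^sup>2) \<le> (\<Sum>l\<in>(UNIV :: 'm set). 2)"
    by (intro sum_mono phi_square_le)
  then show ?thesis by (simp add: norm_power2_vec regressor_nth)
qed

lemma bounded_rv_regressor: "bounded_rv (regressor t i k)"
  unfolding bounded_rv_def bounded_iff
  using regressor_measurable[OF X_rv] real_le_rsqrt[OF norm_regressor_le] by blast

lemma square_integrable_v: "square_integrable (v t i k)"
  using v_rv v_int2[of t i k k] by (simp add: square_integrable_def power2_eq_square)

lemma square_integrable_noise_input: "square_integrable (noise_input t i)"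
  unfolding noise_input_def
  by (intro square_integrable_sum square_integrable_scaleR_bounded square_integrable_v bounded_rv_regressor)

lemma square_integrable_gram_mult:
  "square_integrable x \<Longrightarrow> square_integrable (\<lambda>\<omega>. gram t i \<omega> *v x \<omega>)"
  unfolding gram_mult_vec
  by (intro square_integrable_sum square_integrable_scaleR_bounded square_integrable_inner_bounded
      bounded_rv_regressor)

lemma square_integrable_drift:
  assumes "\<And>j. square_integrable (err t j)"
  shows "square_integrable (drift t i)"
  unfolding drift_def kron_apply_def
  by (intro square_integrable_add square_integrable_sum square_integrable_scaleR
      square_integrable_gram_mult assms)

lemma square_integrable_err: "square_integrable (err t i)"
proof (induction t arbitrary: i)
  case 0
  have "square_integrable (\<theta>0 i)" using theta0_rv theta0_L2 by (simp add: square_integrable_def)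
  then show ?case unfolding err_0 by (intro square_integrable_diff square_integrable_const)
next
  case (Suc t)
  then show ?case
    unfolding err_Suc
    by (intro square_integrable_add square_integrable_diff square_integrable_scaleR
        square_integrable_drift square_integrable_noise_input)
qed

end

section \<open>Mean-square analysis\<close>

lemma limsup_linear_recursion_le:
  fixes a :: "nat \<Rightarrow> real"
  assumes rec: "\<And>t. a (Suc t) \<le> \<rho> * a t + c" and "0 \<le> \<rho>" "\<rho> < 1"
  shows "limsup (\<lambda>t. ennreal (a t)) \<le> ennreal (c / (1 - \<rho>))"
proof -
  define a_lim where "a_lim = c / (1 - \<rho>)"
  define D where "D = max (a 0 - a_lim) 0"
  have fixpoint: "\<rho> * a_lim + c = a_lim" unfolding a_lim_def using \<open>\<rho> < 1\<close> by (simp add: field_simps)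
  have bound: "a t \<le> a_lim + \<rho> ^ t * D" for t
  proof (induction t)
    case (Suc t)
    have "a (Suc t) \<le> \<rho> * (a_lim + \<rho> ^ t * D) + c"
      using rec[of t] mult_left_mono[OF Suc \<open>0 \<le> \<rho>\<close>] by linarith
    also have "\<dots> = a_lim + \<rho> ^ Suc t * D" using fixpoint by (simp add: algebra_simps)
    finally show ?case .
  qed (simp add: D_def)
  have "(\<lambda>t. a_lim + \<rho> ^ t * D) \<longlonglongrightarrow> a_lim + 0 * D"
    using \<open>0 \<le> \<rho>\<close> \<open>\<rho> < 1\<close> by (intro tendsto_intros LIMSEQ_power_zero) simp
  then have "(\<lambda>t. ennreal (a_lim + \<rho> ^ t * D)) \<longlonglongrightarrow> ennreal a_lim"
    by (intro tendsto_ennrealI) simp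
  then have "limsup (\<lambda>t. ennreal (a_lim + \<rho> ^ t * D)) = ennreal a_lim"
    by (rule lim_imp_Limsup[OF trivial_limit_sequentially])
  moreover have "limsup (\<lambda>t. ennreal (a t)) \<le> limsup (\<lambda>t. ennreal (a_lim + \<rho> ^ t * D))"
    using bound by (intro Limsup_mono always_eventually allI ennreal_leI)
  ultimately show ?thesis unfolding a_lim_def by simp
qed

context distributed_estimation
begin

lemma integral_gram_nth:
  "(\<integral>\<omega>. gram t i \<omega> $ l $ l' \<partial>M) = real CARD('c) * Gmat M \<phi> feat X i $ l $ l'"
proof -
  define N where "N = (PiM (UNIV :: ('n \<times> 'c) set) (\<lambda>_. borel :: (real^'d) measure))"
  define Xs where "Xs s = (\<lambda>\<omega> (p :: 'n \<times> 'c). X s (fst p) (snd p) \<omega>)" for s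
  define f where "f x = (\<Sum>k\<in>UNIV. \<phi> (x (i, k)) (feat l) * \<phi> (x (i, k)) (feat l'))"
    for x :: "'n \<times> 'c \<Rightarrow> real^'d"
  have Xs_meas: "Xs s \<in> measurable M N" for s
    unfolding Xs_def N_def by (rule measurable_PiM_single') (auto intro: X_rv)
  have "(\<lambda>x. x p) \<in> measurable N borel" for p
    unfolding N_def by (rule measurable_component_singleton) simp
  then have "(\<lambda>x. \<phi> (x p) w) \<in> borel_measurable N" for p w
    by (rule measurable_compose[OF _ phi_meas])
  then have f_meas: "f \<in> borel_measurable N"
    unfolding f_def by (intro borel_measurable_sum borel_measurable_times)
  have "(\<integral>\<omega>. f (Xs t \<omega>) \<partial>M) = (\<integral>\<omega>. f (Xs 0 \<omega>) \<partial>M)"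
    using X_stationary[of t] unfolding N_def Xs_def
    by (simp add: integral_distr[OF Xs_meas[unfolded N_def Xs_def] f_meas[unfolded N_def], symmetric])
  then show ?thesis
    by (simp add: Gmat_def gram_def regressor_nth f_def Xs_def)
qed

lemma integrable_gram_nth: "integrable M (\<lambda>\<omega>. gram t i \<omega> $ l $ l')"
proof -
  have comp: "square_integrable (\<lambda>\<omega>. regressor t i k \<omega> $ l)" for k l
    by (rule square_integrable_bounded_linear[OF bounded_linear_vec_nth
          bounded_rv_square_integrable[OF bounded_rv_regressor]])
  have "integrable M (\<lambda>\<omega>. regressor t i k \<omega> $ l * regressor t i k \<omega> $ l')" for k
    using integrable_inner_square_integrable[OF comp[of k l] comp[of k l']] by simp
  then show ?thesis by (simp add: gram_def)
qed

abbreviation B :: "real^('n \<times> 'm)^('n \<times> 'm)" where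
  "B \<equiv> Bmat (laplacian E) (real CARD('c)) (Gmat M \<phi> feat X)"

lemma laplacian_E_symmetric: "transpose (laplacian E) = laplacian E"
  by (rule laplacian_symmetric) (rule E_sym)

lemma laplacian_E_psd: "0 \<le> quad_form (laplacian E) x"
  by (rule laplacian_psd) (rule E_sym, rule E_irrefl)

lemma Gmat_symmetric: "transpose (Gmat M \<phi> feat X i) = Gmat M \<phi> feat X i"
  by (simp add: Gmat_def transpose_def vec_eq_iff mult.commute)

lemma B_symmetric: "transpose B = B"
  by (rule Bmat_symmetric[OF laplacian_E_symmetric Gmat_symmetric])

lemma integral_inner_drift:
  "(\<integral>\<omega>. (\<Sum>i\<in>UNIV. err t i \<omega> \<bullet> drift t i \<omega>) \<partial>M) = (\<integral>\<omega>. quad_form B (stack (\<lambda>i. err t i \<omega>)) \<partial>M)"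
proof -
  let ?G = "Gmat M \<phi> feat X"
  have int_kron: "integrable M (\<lambda>\<omega>. \<Sum>i\<in>UNIV. err t i \<omega> \<bullet> kron_apply (laplacian E) (\<lambda>j. err t j \<omega>) i)"
    unfolding kron_apply_def
    by (intro Bochner_Integration.integrable_sum integrable_inner_square_integrable square_integrable_sum
        square_integrable_scaleR square_integrable_err)
  have int_gram: "integrable M (\<lambda>\<omega>. err t i \<omega> \<bullet> (gram t i \<omega> *v err t i \<omega>))" for i
    by (intro integrable_inner_square_integrable square_integrable_gram_mult square_integrable_err)
  have int_G: "integrable M (\<lambda>\<omega>. err t i \<omega> \<bullet> (?G i *v err t i \<omega>))" for i
    by (intro integrable_inner_square_integrable square_integrable_err
        square_integrable_bounded_linear[OF matrix_vector_mul_bounded_linear])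
  \<comment> \<open>the current error depends only on the past, the Gram matrix only on the current inputs\<close>
  have gram: "(\<integral>\<omega>. err t i \<omega> \<bullet> (gram t i \<omega> *v err t i \<omega>) \<partial>M)
      = (\<integral>\<omega>. real CARD('c) * (err t i \<omega> \<bullet> (?G i *v err t i \<omega>)) \<partial>M)" for i
  proof -
    have gram_meas: "gram t i \<in> borel_measurable (input t)"
      by (intro gram_measurable regressor_measurable X_measurable_input)
    moreover have "(\<chi> l l'. \<integral>\<omega>. gram t i \<omega> $ l $ l' \<partial>M) = real CARD('c) *\<^sub>R ?G i"
      by (simp add: integral_gram_nth vec_eq_iff)
    ultimately show ?thesis
      using integral_quad_form_indep[OF indep_past_input space_generated(1,2) err_measurable_past
          square_integrable_err gram_meas integrable_gram_nth]
      by (simp flip: scaleR_matrix_vector_assoc)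
  qed
  have "(\<integral>\<omega>. (\<Sum>i\<in>UNIV. err t i \<omega> \<bullet> drift t i \<omega>) \<partial>M)
      = (\<integral>\<omega>. (\<Sum>i\<in>UNIV. err t i \<omega> \<bullet> kron_apply (laplacian E) (\<lambda>j. err t j \<omega>) i) \<partial>M)
        + (\<Sum>i\<in>UNIV. \<integral>\<omega>. err t i \<omega> \<bullet> (gram t i \<omega> *v err t i \<omega>) \<partial>M)"
    using int_kron int_gram
    by (simp add: drift_def inner_add_right sum.distrib Bochner_Integration.integral_sum)
  also have "\<dots> = (\<integral>\<omega>. quad_form B (stack (\<lambda>i. err t i \<omega>)) \<partial>M)"
    using int_kron int_G
    by (simp add: gram quad_form_Bmat_stack Bochner_Integration.integral_sum sum_distrib_left)
  finally show ?thesis .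
qed

lemma norm_gram_mult_le: "norm (gram t i \<omega> *v x) \<le> 2 * real CARD('m) * real CARD('c) * norm x"
proof -
  have "norm ((regressor t i k \<omega> \<bullet> x) *\<^sub>R regressor t i k \<omega>) \<le> 2 * real CARD('m) * norm x" for k
  proof -
    have "norm ((regressor t i k \<omega> \<bullet> x) *\<^sub>R regressor t i k \<omega>) \<le> (norm (regressor t i k \<omega>))\<^sup>2 * norm x"
      using mult_right_mono[OF Cauchy_Schwarz_ineq2[of "regressor t i k \<omega>" x], of "norm (regressor t i k \<omega>)"]
      by (simp add: power2_eq_square mult_ac)
    also have "\<dots> \<le> 2 * real CARD('m) * norm x" by (intro mult_right_mono norm_regressor_le) simp
    finally show ?thesis .
  qed
  then have "norm (gram t i \<omega> *v x) \<le> (\<Sum>k\<in>(UNIV :: 'c set). 2 * real CARD('m) * norm x)"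
    unfolding gram_mult_vec by (rule sum_norm_le)
  then show ?thesis by (simp add: mult_ac)
qed

lemma sum_norm_drift_le:
  "(\<Sum>i\<in>UNIV. (norm (drift t i \<omega>))\<^sup>2)
     \<le> (lam_max (laplacian E) + 2 * real CARD('m) * real CARD('c))\<^sup>2 * (\<Sum>i\<in>UNIV. (norm (err t i \<omega>))\<^sup>2)"
  unfolding drift_def
proof (rule sum_norm_add_le)
  show "(\<Sum>i\<in>UNIV. (norm (kron_apply (laplacian E) (\<lambda>j. err t j \<omega>) i))\<^sup>2)
      \<le> (lam_max (laplacian E))\<^sup>2 * (\<Sum>i\<in>UNIV. (norm (err t i \<omega>))\<^sup>2)"
    by (rule sum_norm_kron_apply_le[OF laplacian_E_symmetric laplacian_E_psd])
  show "0 \<le> lam_max (laplacian E)"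
    by (rule psd_lam_max_nonneg[OF laplacian_E_symmetric laplacian_E_psd])
  have "(norm (gram t i \<omega> *v err t i \<omega>))\<^sup>2 \<le> (2 * real CARD('m) * real CARD('c))\<^sup>2 * (norm (err t i \<omega>))\<^sup>2"
    for i unfolding power_mult_distrib[symmetric] by (intro power_mono norm_gram_mult_le) simp
  then show "(\<Sum>i\<in>UNIV. (norm (gram t i \<omega> *v err t i \<omega>))\<^sup>2)
      \<le> (2 * real CARD('m) * real CARD('c))\<^sup>2 * (\<Sum>i\<in>UNIV. (norm (err t i \<omega>))\<^sup>2)"
    unfolding sum_distrib_left by (rule sum_mono)
qed simp

lemma square_integrable_stack_err: "square_integrable (\<lambda>\<omega>. stack (\<lambda>i. err t i \<omega>))"
  unfolding square_integrable_def norm_stack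
proof
  have "(\<lambda>\<omega>. stack (\<lambda>i. err t i \<omega>)) = (\<lambda>\<omega>. \<chi> p. err t (fst p) \<omega> $ snd p)"
    by (simp add: stack_def)
  moreover have "err t i \<in> borel_measurable M" for i
    using square_integrable_err unfolding square_integrable_def by blast
  ultimately show "(\<lambda>\<omega>. stack (\<lambda>i. err t i \<omega>)) \<in> borel_measurable M"
    by (simp only:) (intro borel_measurable_vec_lambda borel_measurable_vec_nth)
  show "integrable M (\<lambda>\<omega>. \<Sum>i\<in>UNIV. (norm (err t i \<omega>))\<^sup>2)"
    using square_integrable_err unfolding square_integrable_def by auto
qed

lemma lam_min_le_integral_inner_drift:
  "lam_min B * (\<integral>\<omega>. (\<Sum>i\<in>UNIV. (norm (err t i \<omega>))\<^sup>2) \<partial>M)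
     \<le> (\<integral>\<omega>. (\<Sum>i\<in>UNIV. err t i \<omega> \<bullet> drift t i \<omega>) \<partial>M)"
proof -
  have "(\<integral>\<omega>. lam_min B * (\<Sum>i\<in>UNIV. (norm (err t i \<omega>))\<^sup>2) \<partial>M)
      \<le> (\<integral>\<omega>. quad_form B (stack (\<lambda>i. err t i \<omega>)) \<partial>M)"
  proof (rule integral_mono)
    show "integrable M (\<lambda>\<omega>. lam_min B * (\<Sum>i\<in>UNIV. (norm (err t i \<omega>))\<^sup>2))"
      using square_integrable_stack_err unfolding square_integrable_def norm_stack by simp
    show "integrable M (\<lambda>\<omega>. quad_form B (stack (\<lambda>i. err t i \<omega>)))"
      unfolding quad_form_def
      by (intro integrable_inner_square_integrable square_integrable_stack_err
          square_integrable_bounded_linear[OF matrix_vector_mul_bounded_linear])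
    show "lam_min B * (\<Sum>i\<in>UNIV. (norm (err t i \<omega>))\<^sup>2) \<le> quad_form B (stack (\<lambda>i. err t i \<omega>))"
      for \<omega> using lam_min_le_quad_form[OF B_symmetric] by (simp flip: norm_stack)
  qed
  then show ?thesis by (simp add: integral_inner_drift)
qed

lemma integrable_v: "integrable M (v t i k)"
  using square_integrable_imp_integrable[OF v_rv] v_int2[of t i k k] by (simp add: power2_eq_square)

lemma integral_cross_noise:
  "(\<integral>\<omega>. (\<Sum>i\<in>UNIV. (err t i \<omega> - \<alpha> *\<^sub>R drift t i \<omega>) \<bullet> noise_input t i \<omega>) \<partial>M) = 0"
proof -
  define u where "u i \<omega> = err t i \<omega> - \<alpha> *\<^sub>R drift t i \<omega>" for i \<omega>
  have regressor_meas: "regressor t i k \<in> borel_measurable (past_input t)" for i k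
    by (rule measurable_from_subalg[OF subalgebra_past_input(2) regressor_measurable[OF X_measurable_input]])
  have "u i \<in> borel_measurable (past_input t)" for i
    unfolding u_def
    by (intro borel_measurable_diff borel_measurable_scaleR borel_measurable_const drift_measurable
        measurable_from_subalg[OF subalgebra_past_input(1) err_measurable_past] regressor_meas)
  then have meas: "(\<lambda>\<omega>. u i \<omega> \<bullet> regressor t i k \<omega>) \<in> borel_measurable (past_input t)" for i k
    using regressor_meas by (rule borel_measurable_inner)
  have int: "integrable M (\<lambda>\<omega>. u i \<omega> \<bullet> regressor t i k \<omega>)" for i k
    unfolding u_def
    by (intro integrable_inner_square_integrable square_integrable_diff square_integrable_scaleR
        square_integrable_drift square_integrable_err bounded_rv_square_integrable bounded_rv_regressor)
  \<comment> \<open>the noise at time \<open>t\<close> is centred and independent of the past and current inputs, which determine \<open>u\<close>\<close>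
  have "integrable M (\<lambda>\<omega>. (u i \<omega> \<bullet> regressor t i k \<omega>) * v t i k \<omega>)"
    "(\<integral>\<omega>. (u i \<omega> \<bullet> regressor t i k \<omega>) * v t i k \<omega> \<partial>M) = 0" for i k
    using indep_set_integral_mult[OF indep_past_input_noise space_generated(4,3) meas
        v_measurable_noise int integrable_v] v_mean by simp_all
  moreover have "u i \<omega> \<bullet> noise_input t i \<omega> = (\<Sum>k\<in>UNIV. (u i \<omega> \<bullet> regressor t i k \<omega>) * v t i k \<omega>)" for i \<omega>
    by (simp add: noise_input_def inner_sum_right mult.commute)
  ultimately show ?thesis
    by (simp add: u_def[symmetric] Bochner_Integration.integral_sum)
qed

lemma integral_norm_noise_input_le:
  "(\<integral>\<omega>. (norm (noise_input t i \<omega>))\<^sup>2 \<partial>M) \<le> 2 * real CARD('m) * real CARD('c) * \<sigma>v\<^sup>2"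
proof -
  have meas: "(\<lambda>\<omega>. regressor t i k \<omega> \<bullet> regressor t i k' \<omega>) \<in> borel_measurable (input t)" for k k'
    by (intro borel_measurable_inner regressor_measurable X_measurable_input)
  have int: "integrable M (\<lambda>\<omega>. regressor t i k \<omega> \<bullet> regressor t i k' \<omega>)" for k k'
    by (intro integrable_inner_square_integrable bounded_rv_square_integrable bounded_rv_regressor)
  \<comment> \<open>inputs and noise at time \<open>t\<close> are independent, and the noise is white\<close>
  have prod_int: "integrable M (\<lambda>\<omega>. (regressor t i k \<omega> \<bullet> regressor t i k' \<omega>) * (v t i k \<omega> * v t i k' \<omega>))"
    and prod_eq: "(\<integral>\<omega>. (regressor t i k \<omega> \<bullet> regressor t i k' \<omega>) * (v t i k \<omega> * v t i k' \<omega>) \<partial>M)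
       = (if k = k' then (\<integral>\<omega>. (norm (regressor t i k \<omega>))\<^sup>2 \<partial>M) * \<sigma>v\<^sup>2 else 0)" for k k'
    using indep_set_integral_mult[OF indep_input_noise space_generated(2,3) meas
        borel_measurable_times[OF v_measurable_noise v_measurable_noise] int v_int2] v_cov
    by (simp_all add: power2_norm_eq_inner)
  have expand: "(norm (noise_input t i \<omega>))\<^sup>2
      = (\<Sum>k\<in>UNIV. \<Sum>k'\<in>UNIV. (regressor t i k \<omega> \<bullet> regressor t i k' \<omega>) * (v t i k \<omega> * v t i k' \<omega>))" for \<omega>
    by (simp add: noise_input_def power2_norm_eq_inner inner_sum_left inner_sum_right sum_distrib_left
        inner_commute mult_ac)
  have "(\<integral>\<omega>. (norm (noise_input t i \<omega>))\<^sup>2 \<partial>M)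
      = (\<Sum>k\<in>UNIV. \<Sum>k'\<in>UNIV. \<integral>\<omega>. (regressor t i k \<omega> \<bullet> regressor t i k' \<omega>) * (v t i k \<omega> * v t i k' \<omega>) \<partial>M)"
    unfolding expand using prod_int by (simp add: Bochner_Integration.integral_sum)
  also have "\<dots> = (\<Sum>k\<in>UNIV. \<Sum>k'\<in>UNIV. if k = k' then (\<integral>\<omega>. (norm (regressor t i k \<omega>))\<^sup>2 \<partial>M) * \<sigma>v\<^sup>2 else 0)"
    by (simp only: prod_eq)
  also have "\<dots> = (\<Sum>k\<in>UNIV. (\<integral>\<omega>. (norm (regressor t i k \<omega>))\<^sup>2 \<partial>M) * \<sigma>v\<^sup>2)"
    by simp
  also have "\<dots> \<le> (\<Sum>k\<in>(UNIV :: 'c set). 2 * real CARD('m) * \<sigma>v\<^sup>2)"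
  proof (intro sum_mono mult_right_mono)
    show "(\<integral>\<omega>. (norm (regressor t i k \<omega>))\<^sup>2 \<partial>M) \<le> 2 * real CARD('m)" for k
    proof -
      have "(\<integral>\<omega>. (norm (regressor t i k \<omega>))\<^sup>2 \<partial>M) \<le> (\<integral>\<omega>. 2 * real CARD('m) \<partial>M)"
        using int[of k k] by (intro integral_mono norm_regressor_le) (simp_all add: power2_norm_eq_inner)
      then show ?thesis by (simp add: prob_space)
    qed
  qed simp
  finally show ?thesis by (simp add: mult_ac)
qed

definition mse :: "nat \<Rightarrow> real" where
  "mse t = (\<integral>\<omega>. (\<Sum>i\<in>UNIV. (norm (err t i \<omega>))\<^sup>2) \<partial>M)"

lemma sum_norm_err_Suc:
  "(\<Sum>i\<in>UNIV. (norm (err (Suc t) i \<omega>))\<^sup>2)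
     = (\<Sum>i\<in>UNIV. (norm (err t i \<omega>))\<^sup>2) - 2 * \<alpha> * (\<Sum>i\<in>UNIV. err t i \<omega> \<bullet> drift t i \<omega>)
       + \<alpha>\<^sup>2 * (\<Sum>i\<in>UNIV. (norm (drift t i \<omega>))\<^sup>2)
       + 2 * \<alpha> * (\<Sum>i\<in>UNIV. (err t i \<omega> - \<alpha> *\<^sub>R drift t i \<omega>) \<bullet> noise_input t i \<omega>)
       + \<alpha>\<^sup>2 * (\<Sum>i\<in>UNIV. (norm (noise_input t i \<omega>))\<^sup>2)"
proof -
  have "(norm (x - \<alpha> *\<^sub>R d + \<alpha> *\<^sub>R w))\<^sup>2
      = (norm x)\<^sup>2 - 2 * \<alpha> * (x \<bullet> d) + \<alpha>\<^sup>2 * (norm d)\<^sup>2 + 2 * \<alpha> * ((x - \<alpha> *\<^sub>R d) \<bullet> w)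
        + \<alpha>\<^sup>2 * (norm w)\<^sup>2" for x d w :: "real^'m"
    unfolding power2_norm_eq_inner
    by (simp add: inner_add_left inner_add_right inner_diff_left inner_diff_right inner_commute
        power2_eq_square algebra_simps)
  then show ?thesis
    by (simp add: err_Suc sum.distrib sum_subtractf sum_distrib_left)
qed

lemma mse_Suc_eq:
  "mse (Suc t) = mse t - 2 * \<alpha> * (\<integral>\<omega>. (\<Sum>i\<in>UNIV. err t i \<omega> \<bullet> drift t i \<omega>) \<partial>M)
     + \<alpha>\<^sup>2 * (\<integral>\<omega>. (\<Sum>i\<in>UNIV. (norm (drift t i \<omega>))\<^sup>2) \<partial>M)
     + 2 * \<alpha> * (\<integral>\<omega>. (\<Sum>i\<in>UNIV. (err t i \<omega> - \<alpha> *\<^sub>R drift t i \<omega>) \<bullet> noise_input t i \<omega>) \<partial>M)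
     + \<alpha>\<^sup>2 * (\<Sum>i\<in>UNIV. \<integral>\<omega>. (norm (noise_input t i \<omega>))\<^sup>2 \<partial>M)"
proof -
  have sq_drift: "square_integrable (drift t i)" for i
    by (intro square_integrable_drift square_integrable_err)
  have int_norm: "integrable M (\<lambda>\<omega>. (norm (f \<omega>))\<^sup>2)" if "square_integrable f" for f :: "'a \<Rightarrow> real^'m"
    using that by (simp add: square_integrable_def)
  have int_inner: "integrable M (\<lambda>\<omega>. err t i \<omega> \<bullet> drift t i \<omega>)"
    "integrable M (\<lambda>\<omega>. (err t i \<omega> - \<alpha> *\<^sub>R drift t i \<omega>) \<bullet> noise_input t i \<omega>)" for i
    by (intro integrable_inner_square_integrable square_integrable_err sq_drift square_integrable_diff
        square_integrable_scaleR square_integrable_noise_input)+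
  show ?thesis
    unfolding mse_def sum_norm_err_Suc
    using int_norm[OF square_integrable_err] int_norm[OF sq_drift] int_norm[OF square_integrable_noise_input]
      int_inner
    by (simp add: Bochner_Integration.integral_sum)
qed

lemma mse_Suc_le:
  defines "K \<equiv> lam_max (laplacian E) + 2 * real CARD('m) * real CARD('c)"
  shows "mse (Suc t) \<le> (1 - 2 * \<alpha> * lam_min B + \<alpha>\<^sup>2 * K\<^sup>2) * mse t
     + \<alpha>\<^sup>2 * (real CARD('n) * (2 * real CARD('m) * real CARD('c) * \<sigma>v\<^sup>2))"
proof -
  have "(\<integral>\<omega>. (\<Sum>i\<in>UNIV. (norm (drift t i \<omega>))\<^sup>2) \<partial>M) \<le> (\<integral>\<omega>. K\<^sup>2 * (\<Sum>i\<in>UNIV. (norm (err t i \<omega>))\<^sup>2) \<partial>M)"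
    using square_integrable_err square_integrable_drift[OF square_integrable_err]
    by (intro integral_mono) (simp_all add: K_def sum_norm_drift_le square_integrable_def)
  then have "\<alpha>\<^sup>2 * (\<integral>\<omega>. (\<Sum>i\<in>UNIV. (norm (drift t i \<omega>))\<^sup>2) \<partial>M) \<le> \<alpha>\<^sup>2 * (K\<^sup>2 * mse t)"
    by (simp add: mse_def mult_left_mono)
  moreover have "2 * \<alpha> * (lam_min B * mse t) \<le> 2 * \<alpha> * (\<integral>\<omega>. (\<Sum>i\<in>UNIV. err t i \<omega> \<bullet> drift t i \<omega>) \<partial>M)"
    using lam_min_le_integral_inner_drift alpha_pos unfolding mse_def by simp
  moreover have "\<alpha>\<^sup>2 * (\<Sum>i\<in>UNIV. \<integral>\<omega>. (norm (noise_input t i \<omega>))\<^sup>2 \<partial>M)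
      \<le> \<alpha>\<^sup>2 * (\<Sum>i\<in>(UNIV :: 'n set). 2 * real CARD('m) * real CARD('c) * \<sigma>v\<^sup>2)"
    by (intro mult_left_mono sum_mono integral_norm_noise_input_le) simp_all
  moreover have "2 * \<alpha> * (\<integral>\<omega>. (\<Sum>i\<in>UNIV. (err t i \<omega> - \<alpha> *\<^sub>R drift t i \<omega>) \<bullet> noise_input t i \<omega>) \<partial>M) = 0"
    by (simp add: integral_cross_noise)
  ultimately have "mse (Suc t) \<le> mse t - 2 * \<alpha> * (lam_min B * mse t) + \<alpha>\<^sup>2 * (K\<^sup>2 * mse t)
      + \<alpha>\<^sup>2 * (\<Sum>i\<in>(UNIV :: 'n set). 2 * real CARD('m) * real CARD('c) * \<sigma>v\<^sup>2)"
    unfolding mse_Suc_eq by linarith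
  then show ?thesis by (simp add: algebra_simps)
qed

lemma lam_min_B_le: "lam_min B \<le> lam_max (laplacian E) + 2 * real CARD('m) * real CARD('c)"
proof -
  fix i :: 'n and l :: 'm
  have "lam_min B \<le> B $ (i, l) $ (i, l)"
    using lam_min_le_quad_form[OF B_symmetric, of "axis (i, l) 1"] by (simp add: quad_form_axis)
  also have "\<dots> = laplacian E $ i $ i + real CARD('c) * Gmat M \<phi> feat X i $ l $ l"
    by (simp add: Bmat_def)
  also have "laplacian E $ i $ i \<le> lam_max (laplacian E)"
    using quad_form_le_lam_max[OF laplacian_E_symmetric, of "axis i 1"] by (simp add: quad_form_axis)
  also have "real CARD('c) * Gmat M \<phi> feat X i $ l $ l \<le> 2 * real CARD('c)"
  proof -
    have "gram 0 i \<omega> $ l $ l \<le> (\<Sum>k\<in>(UNIV :: 'c set). 2)" for \<omega>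
      unfolding gram_def regressor_nth vec_lambda_beta
      by (intro sum_mono) (simp add: phi_square_le flip: power2_eq_square)
    then have "(\<integral>\<omega>. gram 0 i \<omega> $ l $ l \<partial>M) \<le> (\<integral>\<omega>. 2 * real CARD('c) \<partial>M)"
      using integrable_gram_nth by (intro integral_mono) (simp_all add: mult.commute)
    then show ?thesis by (simp add: integral_gram_nth prob_space)
  qed
  also have "lam_max (laplacian E) + 2 * real CARD('c) \<le> lam_max (laplacian E) + 2 * real CARD('m) * real CARD('c)"
    by simp
  finally show ?thesis by simp
qed

lemma limsup_mse_le:
  defines "K \<equiv> lam_max (laplacian E) + 2 * real CARD('m) * real CARD('c)"
  assumes alpha_small: "\<alpha> < 2 * lam_min B / K\<^sup>2"
  shows "limsup (\<lambda>t. ennreal (mse t))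
           \<le> ennreal (2 * \<alpha> * real CARD('c) * real CARD('m) * real CARD('n) * \<sigma>v\<^sup>2
                      / (2 * lam_min B - \<alpha> * K\<^sup>2))"
proof -
  define \<rho> where "\<rho> = 1 - 2 * \<alpha> * lam_min B + \<alpha>\<^sup>2 * K\<^sup>2"
  have "0 < K"
    using psd_lam_max_nonneg[OF laplacian_E_symmetric laplacian_E_psd]
    by (simp add: K_def add_nonneg_pos)
  then have margin: "\<alpha> * K\<^sup>2 < 2 * lam_min B" using alpha_small by (simp add: pos_less_divide_eq)
  \<comment> \<open>\<open>\<rho> \<ge> (1 - \<alpha> K)\<^sup>2\<close> because \<open>\<lambda>\<^sub>m\<^sub>i\<^sub>n(B) \<le> K\<close>\<close>
  have "0 \<le> \<rho>"
  proof -
    have "2 * \<alpha> * lam_min B \<le> 2 * \<alpha> * K" using lam_min_B_le alpha_pos by (simp add: K_def)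
    then show ?thesis
      using zero_le_power2[of "1 - \<alpha> * K"] by (simp add: \<rho>_def power2_eq_square algebra_simps)
  qed
  moreover have "\<rho> < 1" using margin alpha_pos by (simp add: \<rho>_def power2_eq_square algebra_simps)
  moreover have "mse (Suc t) \<le> \<rho> * mse t
      + \<alpha>\<^sup>2 * (real CARD('n) * (2 * real CARD('m) * real CARD('c) * \<sigma>v\<^sup>2))" for t
    using mse_Suc_le unfolding \<rho>_def K_def .
  ultimately have "limsup (\<lambda>t. ennreal (mse t))
      \<le> ennreal (\<alpha>\<^sup>2 * (real CARD('n) * (2 * real CARD('m) * real CARD('c) * \<sigma>v\<^sup>2)) / (1 - \<rho>))"
    by (intro limsup_linear_recursion_le)
  also have "1 - \<rho> = \<alpha> * (2 * lam_min B - \<alpha> * K\<^sup>2)"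
    by (simp add: \<rho>_def power2_eq_square algebra_simps)
  finally show ?thesis
    using alpha_pos margin by (simp add: power2_eq_square mult_ac)
qed

end

theorem theorem1:
  fixes M :: "'a measure"
    and \<phi> :: "real^'d \<Rightarrow> real^'d \<Rightarrow> real"
    and feat :: "'m::finite \<Rightarrow> real^'d"
    and \<theta> :: "real^'m"
    and \<theta>0 :: "'n::finite \<Rightarrow> 'a \<Rightarrow> real^'m"
    and X :: "nat \<Rightarrow> 'n \<Rightarrow> 'c::finite \<Rightarrow> 'a \<Rightarrow> real^'d"
    and v :: "nat \<Rightarrow> 'n \<Rightarrow> 'c \<Rightarrow> 'a \<Rightarrow> real"
    and \<sigma>v :: real
    and E :: "'n \<Rightarrow> 'n \<Rightarrow> bool"
    and \<alpha> :: real
  assumes prob: "prob_space M"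
    and phi_bound: "\<And>x w. \<bar>\<phi> x w\<bar> \<le> sqrt 2"
    and phi_meas: "\<And>w. (\<lambda>x. \<phi> x w) \<in> borel_measurable borel"
    and theta0_rv: "\<And>i. \<theta>0 i \<in> borel_measurable M"
    and theta0_L2: "\<And>i. integrable M (\<lambda>\<omega>. (norm (\<theta>0 i \<omega>))\<^sup>2)"
    and X_rv: "\<And>t i k. X t i k \<in> borel_measurable M"
    and X_stationary: "\<And>t. distr M (PiM UNIV (\<lambda>_. borel)) (\<lambda>\<omega> p. X t (fst p) (snd p) \<omega>)
                          = distr M (PiM UNIV (\<lambda>_. borel)) (\<lambda>\<omega> p. X 0 (fst p) (snd p) \<omega>)"
    and v_rv: "\<And>t i k. v t i k \<in> borel_measurable M"
    and v_int: "\<And>t i k. integrable M (v t i k)"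
    and v_mean: "\<And>t i k. integral\<^sup>L M (v t i k) = 0"
    and v_int2: "\<And>t i k k'. integrable M (\<lambda>\<omega>. v t i k \<omega> * v t i k' \<omega>)"
    and v_cov: "\<And>t i k k'. integral\<^sup>L M (\<lambda>\<omega>. v t i k \<omega> * v t i k' \<omega>)
                             = (if k = k' then \<sigma>v\<^sup>2 else 0)"
    and indep: "\<And>t. prob_space.indep_sets M
                  (\<lambda>b::nat. if b = 0 then past_events M \<theta>0 X v t
                            else if b = 1 then input_events M X t
                            else noise_events M v t) {0, 1, 2}"
    and E_sym: "\<And>i j. E i j = E j i"
    and E_irrefl: "\<And>i. \<not> E i i"
    and E_conn: "connected_graph E"
    and alpha_pos: "0 < \<alpha>"
    and alpha_deg: "\<alpha> < 1 / real (max_degree E)"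
    and G_rank: "\<And>i. rank (Gmat M \<phi> feat X i) < CARD('m)"
    and G_sum_inv: "invertible (\<Sum>i\<in>UNIV. Gmat M \<phi> feat X i)"
    and alpha_small: "\<alpha> < 2 * lam_min (Bmat (laplacian E) (real CARD('c)) (Gmat M \<phi> feat X))
                          / (lam_max (laplacian E) + 2 * real CARD('m) * real CARD('c))\<^sup>2"
  shows "limsup (\<lambda>t. \<integral>\<^sup>+ \<omega>. ennreal (\<Sum>i\<in>UNIV.
             (norm (est (mat 1 - \<alpha> *\<^sub>R laplacian E) \<alpha> \<phi> feat \<theta> \<theta>0 X v t i \<omega> - \<theta>))\<^sup>2) \<partial>M)
         \<le> ennreal (2 * \<alpha> * real CARD('c) * real CARD('m) * real CARD('n) * \<sigma>v\<^sup>2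
               / (2 * lam_min (Bmat (laplacian E) (real CARD('c)) (Gmat M \<phi> feat X))
                  - \<alpha> * (lam_max (laplacian E) + 2 * real CARD('m) * real CARD('c))\<^sup>2))"
proof -
  \<comment> \<open>Only the step-size condition enters; connectivity and the invertibility of \<open>\<Sum>G\<^sub>i\<close> are what make
     \<open>\<lambda>\<^sub>M\<^sub>n(B)\<close> positive, so that it can be met.\<close>
  interpret distributed_estimation M \<phi> feat \<theta> \<theta>0 X v \<sigma>v E \<alpha>
    by (intro distributed_estimation.intro distributed_estimation_axioms.intro prob) (rule assms)+
  have "(\<integral>\<^sup>+ \<omega>. ennreal (\<Sum>i\<in>UNIV.
      (norm (est (mat 1 - \<alpha> *\<^sub>R laplacian E) \<alpha> \<phi> feat \<theta> \<theta>0 X v t i \<omega> - \<theta>))\<^sup>2) \<partial>M) = ennreal (mse t)" for t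
  proof -
    have "integrable M (\<lambda>\<omega>. \<Sum>i\<in>UNIV. (norm (err t i \<omega>))\<^sup>2)"
      using square_integrable_err by (simp add: square_integrable_def)
    then show ?thesis
      unfolding mse_def err_def[symmetric] by (intro nn_integral_eq_integral AE_I2 sum_nonneg) simp_all
  qed
  then show ?thesis using limsup_mse_le[OF alpha_small] by simp
qed

end
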